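(* The functions $Z_{ij}^{k+1,l+1}(x,y)$ for $i=-k,\dots,g-1$, $j=-l,\dots,h-1$, together with $Z_i^{k+1}(x,y)$ for $i=-k,\dots,g-1$ and $Z_j^{l+1}(x,y)$ for $j=-l,\dots,h-1$, form a basis of the vector space $\mathcal Z_{kl}^{\Delta\lambda,\Delta\mu}(\Omega)$. In particular $$\dim \mathcal Z_{kl}^{\Delta\lambda,\Delta\mu}(\Omega)=(g+k+1)(h+l+1)-1=(g+k)(h+l)+g+k+h+l.$$
   Context: Let $\Omega=[a,b]\times[c,d]\subset\mathbb R^2$ with $a<b$, $c<d$. Fix integers $g,h\ge 0$ and degrees $k,l\in\mathbb N_0$. Take knots $a=\lambda_0<\lambda_1<\dots<\lambda_g<\lambda_{g+1}=b$ and $c=\mu_0<\mu_1<\dots<\mu_h<\mu_{h+1}=d$, extended by coincident boundary knots $\lambda_{-k}=\dots=\lambda_0=a$, $\lambda_{g+1}=\dots=\lambda_{g+k+1}=b$, and $\mu_{-l}=\dots=\mu_0=c$, $\mu_{h+1}=\dots=\mu_{h+l+1}=d$. For $i=-k,\dots,g$ let $B_i^{k+1}(x)$ denote the (normalized) B-spline of degree $k$ with knots $\lambda_i,\dots,\lambda_{i+k+1}$, so that $\sum_{i=-k}^g B_i^{k+1}(x)=1$ on $[a,b]$; similarly $B_j^{l+1}(y)$, $j=-l,\dots,h$, is the B-spline of degree $l$ with knots $\mu_j,\dots,\mu_{j+l+1}$. Let $\mathcal S_{kl}^{\Delta\lambda,\Delta\mu}(\Omega)$ be the space of tensor product splines on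 $\Omega$ of degree $k$ in $x$ (knots $\lambda$) and degree $l$ in $y$ (knots $\mu$), i.e. the span of the functions $B_i^{k+1}(x)B_j^{l+1}(y)$, which has dimension $(g+k+1)(h+l+1)$. Define $\mathcal Z_{kl}^{\Delta\lambda,\Delta\mu}(\Omega)=\{s\in\mathcal S_{kl}^{\Delta\lambda,\Delta\mu}(\Omega):\iint_\Omega s(x,y)\,dx\,dy=0\}$. The univariate ZB-splines are, for $i=-k,\dots,g-1$, $$Z_i^{k+1}(x)=(k+1)\Big(\frac{B_i^{k+1}(x)}{\lambda_{i+k+1}-\lambda_i}-\frac{B_{i+1}^{k+1}(x)}{\lambda_{i+k+2}-\lambda_{i+1}}\Big)$$ (equivalently, the derivative of the degree-$(k+1)$ B-spline with knots $\lambda_i,\dots,\lambda_{i+k+2}$), and analogously $Z_j^{l+1}(y)=(l+1)\big(\frac{B_j^{l+1}(y)}{\mu_{j+l+1}-\mu_j}-\frac{B_{j+1}^{l+1}(y)}{\mu_{j+l+2}-\mu_{j+1}}\big)$ for $j=-l,\dots,h-1$. The bivariate ZB-splines are $Z_{ij}^{k+1,l+1}(x,y)=Z_i^{k+1}(x)Z_j^{l+1}(y)$, $Z_i^{k+1}(x,y)=Z_i^{k+1}(x)$ and $Z_j^{l+1}(x,y)=Z_j^{l+1}(y)$, all regarded as functions on $\Omega$. *)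

theory Defs
  imports "HOL-Analysis.Analysis" "HOL-Library.Function_Algebras"
begin

definition ext_knots :: "(int \<Rightarrow> real) \<Rightarrow> real \<Rightarrow> real \<Rightarrow> nat \<Rightarrow> nat \<Rightarrow> bool" where
  "ext_knots t lo hi g k \<longleftrightarrow>
     lo < hi \<and> t 0 = lo \<and> t (int g + 1) = hi \<and>
     (\<forall>i \<in> {0..int g}. t i < t (i + 1)) \<and>
     (\<forall>i \<in> {- int k..0}. t i = lo) \<and>
     (\<forall>i \<in> {int g + 1..int g + int k + 1}. t i = hi)"

text \<open>Normalized B-spline of degree m with knots t i, ..., t (i+m+1) (Cox--de Boor
  recursion, with the convention x / 0 = 0).  The degree-0 B-splines are indicators of
  half-open knot intervals [t i, t (i+1)), except that the last nonempty interval
  ending at the right endpoint hi is closed, so that the B-splines sum to 1 on the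
  whole closed interval.\<close>
fun bspline :: "(int \<Rightarrow> real) \<Rightarrow> real \<Rightarrow> nat \<Rightarrow> int \<Rightarrow> real \<Rightarrow> real" where
  "bspline t hi 0 i x =
     (if t i < t (i + 1) \<and> t i \<le> x \<and> (x < t (i + 1) \<or> (x = hi \<and> t (i + 1) = hi))
      then 1 else 0)"
| "bspline t hi (Suc m) i x =
     (x - t i) / (t (i + int m + 1) - t i) * bspline t hi m i x
     + (t (i + int m + 2) - x) / (t (i + int m + 2) - t (i + 1)) * bspline t hi m (i + 1) x"

definition zbspline :: "(int \<Rightarrow> real) \<Rightarrow> real \<Rightarrow> nat \<Rightarrow> int \<Rightarrow> real \<Rightarrow> real" where
  "zbspline t hi k i x =
     (real k + 1) * (bspline t hi k i x / (t (i + int k + 1) - t i)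
                     - bspline t hi k (i + 1) x / (t (i + int k + 2) - t (i + 1)))"

text \<open>Functions on the rectangle Omega are represented by functions on real \<times> real
  vanishing outside Omega.\<close>
definition restr :: "real \<Rightarrow> real \<Rightarrow> real \<Rightarrow> real \<Rightarrow> (real \<times> real \<Rightarrow> real) \<Rightarrow> (real \<times> real \<Rightarrow> real)" where
  "restr a b c d f = (\<lambda>p. if p \<in> {a..b} \<times> {c..d} then f p else 0)"

definition fscale :: "real \<Rightarrow> (real \<times> real \<Rightarrow> real) \<Rightarrow> (real \<times> real \<Rightarrow> real)" where
  "fscale r f = (\<lambda>p. r * f p)"

definition spline_space ::
  "real \<Rightarrow> real \<Rightarrow> real \<Rightarrow> real \<Rightarrow> nat \<Rightarrow> nat \<Rightarrow> nat \<Rightarrow> nat \<Rightarrow>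
   (int \<Rightarrow> real) \<Rightarrow> (int \<Rightarrow> real) \<Rightarrow> (real \<times> real \<Rightarrow> real) set" where
  "spline_space a b c d g h k l lam mu =
     {s. \<exists>coef :: int \<Rightarrow> int \<Rightarrow> real.
          s = restr a b c d (\<lambda>(x, y). \<Sum>i \<in> {- int k..int g}. \<Sum>j \<in> {- int l..int h}.
                 coef i j * bspline lam b k i x * bspline mu d l j y)}"

definition zero_int_space ::
  "real \<Rightarrow> real \<Rightarrow> real \<Rightarrow> real \<Rightarrow> nat \<Rightarrow> nat \<Rightarrow> nat \<Rightarrow> nat \<Rightarrow>
   (int \<Rightarrow> real) \<Rightarrow> (int \<Rightarrow> real) \<Rightarrow> (real \<times> real \<Rightarrow> real) set" where
  "zero_int_space a b c d g h k l lam mu =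
     {s \<in> spline_space a b c d g h k l lam mu. integral ({a..b} \<times> {c..d}) s = 0}"

text \<open>The bivariate ZB-splines, indexed by Inl (i,j) for Z_ij^{k+1,l+1},
  Inr (Inl i) for Z_i^{k+1}(x,y) and Inr (Inr j) for Z_j^{l+1}(x,y).\<close>
definition zb_index :: "nat \<Rightarrow> nat \<Rightarrow> nat \<Rightarrow> nat \<Rightarrow> (int \<times> int + int + int) set" where
  "zb_index g h k l =
     Inl ` ({- int k..int g - 1} \<times> {- int l..int h - 1})
     \<union> (Inr \<circ> Inl) ` {- int k..int g - 1}
     \<union> (Inr \<circ> Inr) ` {- int l..int h - 1}"

fun zb_fun ::
  "real \<Rightarrow> real \<Rightarrow> real \<Rightarrow> real \<Rightarrow> nat \<Rightarrow> nat \<Rightarrow> (int \<Rightarrow> real) \<Rightarrow> (int \<Rightarrow> real) \<Rightarrow>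
   (int \<times> int + int + int) \<Rightarrow> (real \<times> real \<Rightarrow> real)" where
  "zb_fun a b c d k l lam mu (Inl (i, j)) =
     restr a b c d (\<lambda>(x, y). zbspline lam b k i x * zbspline mu d l j y)"
| "zb_fun a b c d k l lam mu (Inr (Inl i)) =
     restr a b c d (\<lambda>(x, y). zbspline lam b k i x)"
| "zb_fun a b c d k l lam mu (Inr (Inr j)) =
     restr a b c d (\<lambda>(x, y). zbspline mu d l j y)"

end

theory Submission
  imports Defs
begin

text \<open>On each axis, complete the ZB-splines \<open>Z\<^sub>i\<close>, \<open>-k \<le> i < g\<close>, by the constant
  function \<open>1\<close> at index \<open>g\<close>. This family of \<open>g + k + 1\<close> functions is linearly independent:
  each \<open>Z\<^sub>i\<close> is the derivative of a B-spline of degree \<open>k + 1\<close> that vanishes at both ends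
  of the interval, so it integrates to \<open>0\<close>, which isolates the coefficient of \<open>1\<close>; the remaining
  relation telescopes into a relation between B-splines, and the B-splines are independent
  (near the left end they behave like distinct powers of \<open>x - a\<close>, further right their
  supports separate them). Hence the tensor products of the two completed families are
  \<open>(g + k + 1)(h + l + 1)\<close> independent splines, so they form a basis of the tensor spline
  space. All of them integrate to \<open>0\<close> except \<open>1 \<otimes> 1\<close>, and the others are exactly the
  bivariate ZB-splines, which therefore form a basis of the zero-integral subspace.\<close>

lemma bspline_derivative_identity:
  fixes p0 p1 p2 q0 q1 q2 x b0 b1 b2 :: real
  assumes "p0 \<le> p1" "p1 \<le> q0" "q0 \<le> q1" "q1 \<le> q2" "p1 \<le> p2" "p2 \<le> q1"
  shows "(x-p0)/(q1-p0) * (b0/(q0-p0) - b1/(q1-p1)) + (q2-x)/(q2-p1) * (b1/(q1-p1) - b2/(q2-p2))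
       = ((x-p0)/(q0-p0) * b0 + (q1-x)/(q1-p1) * b1)/(q1-p0) - ((x-p1)/(q1-p1) * b1 + (q2-x)/(q2-p2) * b2)/(q2-p1)"
proof (cases "q1 = p1")
  case False
  then have "q1 - p1 \<noteq> 0" "q1 - p0 \<noteq> 0" "q2 - p1 \<noteq> 0" using assms by auto
  then have "(q2-x)/(q2-p1) - (x-p0)/(q1-p0) = (q1-x)/(q1-p0) - (x-p1)/(q2-p1)"
    by (simp add: field_simps)
  then have "((q2-x)/(q2-p1) - (x-p0)/(q1-p0)) * (b1/(q1-p1)) = ((q1-x)/(q1-p0) - (x-p1)/(q2-p1)) * (b1/(q1-p1))"
    by simp
  then show ?thesis by (simp add: algebra_simps add_divide_distrib diff_divide_distrib)
qed (simp add: field_simps)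

lemma sum_int_shift:
  "(\<Sum>i\<in>{a..b::int}. f (i + 1)) = (\<Sum>j\<in>{a + 1..b + 1}. f j)"
  by (rule sum.reindex_bij_witness[where i="\<lambda>j. j-1" and j="\<lambda>i. i + 1"]) auto

definition positive_zero_order :: "(real \<Rightarrow> real) \<Rightarrow> real \<Rightarrow> nat \<Rightarrow> bool" where
  "positive_zero_order f a n \<longleftrightarrow>
     (\<exists>q. continuous_on UNIV q \<and> 0 < q a \<and> (\<forall>x. f x = (x - a) ^ n * q x))"

lemma positive_zero_order_mult:
  assumes "positive_zero_order f a n" "continuous_on UNIV h" "0 < h a"
  shows "positive_zero_order (\<lambda>x. h x * f x) a n"
proof -
  obtain q where "continuous_on UNIV q" "0 < q a" "\<forall>x. f x = (x - a) ^ n * q x"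
    using assms(1) unfolding positive_zero_order_def by blast
  with assms(2,3) show ?thesis unfolding positive_zero_order_def
    by (intro exI[of _ "\<lambda>x. h x * q x"]) (auto intro!: continuous_intros)
qed

lemma positive_zero_order_Suc:
  assumes "positive_zero_order f a n" "0 < D"
  shows "positive_zero_order (\<lambda>x. (x - a) / D * f x) a (Suc n)"
proof -
  obtain q where "continuous_on UNIV q" "0 < q a" "\<forall>x. f x = (x - a) ^ n * q x"
    using assms(1) unfolding positive_zero_order_def by blast
  with assms(2) show ?thesis unfolding positive_zero_order_def
    by (intro exI[of _ "\<lambda>x. q x / D"]) (auto intro!: continuous_intros)
qed

lemma positive_zero_order_add:
  assumes "positive_zero_order f a n" "positive_zero_order g a n"
  shows "positive_zero_order (\<lambda>x. f x + g x) a n"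
proof -
  obtain p q where "continuous_on UNIV p" "0 < p a" "\<forall>x. f x = (x - a) ^ n * p x"
    "continuous_on UNIV q" "0 < q a" "\<forall>x. g x = (x - a) ^ n * q x"
    using assms unfolding positive_zero_order_def by meson
  then show ?thesis unfolding positive_zero_order_def
    by (intro exI[of _ "\<lambda>x. p x + q x"]) (auto intro!: continuous_intros simp: algebra_simps)
qed

lemma coeffs_zero_if_positive_zero_orders:
  assumes order: "\<And>r. r < n \<Longrightarrow> positive_zero_order (f r) a r" and eps: "0 < \<epsilon>"
    and z: "\<And>x. a < x \<Longrightarrow> x < a + \<epsilon> \<Longrightarrow> (\<Sum>r<n. c r * f r x) = 0"
  shows "\<forall>r<n. c r = 0"
proof (rule ccontr)
  assume "\<not> (\<forall>r<n. c r = 0)"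
  then have ex: "\<exists>r. r < n \<and> c r \<noteq> 0" by auto
  define s where "s = (LEAST r. r < n \<and> c r \<noteq> 0)"
  have s: "s < n" "c s \<noteq> 0" using LeastI_ex[OF ex] unfolding s_def by auto
  have below: "c r = 0" if "r < s" for r
    using not_less_Least[of r "\<lambda>r. r < n \<and> c r \<noteq> 0"] that s unfolding s_def by auto
  obtain Q where Q: "\<And>r. r < n \<Longrightarrow> continuous_on UNIV (Q r) \<and> 0 < Q r a \<and> (\<forall>x. f r x = (x - a) ^ r * Q r x)"
    using order unfolding positive_zero_order_def by metis
  define F where "F x = (\<Sum>r\<in>{s..<n}. c r * (x - a) ^ (r - s) * Q r x)" for x
  have split: "(\<Sum>r<n. c r * f r x) = (x - a) ^ s * F x" for x
  proof -
    have "(\<Sum>r<n. c r * f r x) = (\<Sum>r\<in>{s..<n}. c r * f r x)"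
      using below s by (intro sum.mono_neutral_right) auto
    also have "\<dots> = (\<Sum>r\<in>{s..<n}. (x - a) ^ s * (c r * (x - a) ^ (r - s) * Q r x))"
      using Q by (intro sum.cong refl) (auto simp: power_add[symmetric])
    finally show ?thesis unfolding F_def by (simp add: sum_distrib_left)
  qed
  have "F a = (\<Sum>r\<in>{s..<n}. if r = s then c s * Q s a else 0)"
    unfolding F_def by (intro sum.cong) auto
  with s Q[of s] have "F a \<noteq> 0" by simp
  moreover have "continuous (at a) F"
    using Q unfolding F_def by (intro continuous_intros) (auto simp: continuous_on_eq_continuous_at)
  ultimately obtain e where e: "e > 0" "\<And>y. dist a y < e \<Longrightarrow> F y \<noteq> 0"
    using continuous_at_avoid by blast
  define y where "y = a + min e \<epsilon> / 2"
  have y: "a < y" "y < a + \<epsilon>" "dist a y < e" using e eps unfolding y_def dist_real_def by auto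
  with z[OF y(1,2)] split e show False by simp
qed

lemma integral_interval_eq_lborel:
  fixes f :: "real \<Rightarrow> real"
  assumes f: "f \<in> borel_measurable borel" and bound: "\<And>x. x \<in> {a..b} \<Longrightarrow> \<bar>f x\<bar> \<le> M"
  shows "integrable lborel (\<lambda>x. indicator {a..b} x * f x)"
    and "integral {a..b} f = (\<integral>x. indicator {a..b} x * f x \<partial>lborel)"
proof -
  show int: "integrable lborel (\<lambda>x. indicator {a..b} x * f x)"
  proof (rule Bochner_Integration.integrable_bound)
    show "integrable lborel (\<lambda>x. \<bar>M\<bar> * indicator {a..b} x :: real)"
      by (intro integrable_mult_right integrable_real_indicator) (auto simp: emeasure_lborel_Icc_eq)
    show "AE x in lborel. norm (indicator {a..b} x * f x) \<le> norm (\<bar>M\<bar> * indicator {a..b} x :: real)"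
      using bound by (auto simp: indicator_def intro: order_trans[OF _ abs_ge_self])
  qed (use f in simp)
  have "((\<lambda>x. indicator {a..b} x * f x) has_integral (\<integral>x. indicator {a..b} x * f x \<partial>lborel)) UNIV"
    by (rule has_integral_integral_lborel[OF int])
  moreover have "(\<lambda>x. indicator {a..b} x * f x) = (\<lambda>x. if x \<in> {a..b} then f x else 0)"
    by (auto simp: indicator_def)
  ultimately have "(f has_integral (\<integral>x. indicator {a..b} x * f x \<partial>lborel)) {a..b}"
    using has_integral_restrict_UNIV[of "{a..b}" f] by simp
  then show "integral {a..b} f = (\<integral>x. indicator {a..b} x * f x \<partial>lborel)"
    by (rule integral_unique)
qed

lemma has_integral_tensor_product:
  fixes f g :: "real \<Rightarrow> real"
  assumes f: "f \<in> borel_measurable borel" "\<And>x. x \<in> {a..b} \<Longrightarrow> \<bar>f x\<bar> \<le> Mf"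
    and g: "g \<in> borel_measurable borel" "\<And>y. y \<in> {c..d} \<Longrightarrow> \<bar>g y\<bar> \<le> Mg"
  shows "((\<lambda>z. f (fst z) * g (snd z)) has_integral (integral {a..b} f * integral {c..d} g)) ({a..b} \<times> {c..d})"
proof -
  define F where "F x = indicator {a..b} x * f x" for x
  define G where "G y = indicator {c..d} y * g y" for y
  note F = integral_interval_eq_lborel[where f=f and a=a and b=b and M=Mf, OF f, folded F_def]
  note G = integral_interval_eq_lborel[where f=g and a=c and b=d and M=Mg, OF g, folded G_def]
  have [measurable]: "F \<in> borel_measurable lborel" "G \<in> borel_measurable lborel"
    using F(1) G(1) by auto
  define H where "H z = F (fst z) * G (snd z)" for z :: "real \<times> real"
  have HI: "integrable (lborel \<Otimes>\<^sub>M lborel) H"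
  proof (rule lborel_pair.Fubini_integrable)
    show "H \<in> borel_measurable (lborel \<Otimes>\<^sub>M lborel)" unfolding H_def by measurable
    show "integrable lborel (\<lambda>x. \<integral>y. norm (H (x, y)) \<partial>lborel)"
      using F(1) by (simp add: H_def abs_mult)
    show "AE x in lborel. integrable lborel (\<lambda>y. H (x, y))"
      using G(1) by (simp add: H_def)
  qed
  then have int: "integrable lborel H" by (simp add: lborel_prod)
  have "(\<integral>z. H z \<partial>lborel) = (\<integral>x. \<integral>y. H (x, y) \<partial>lborel \<partial>lborel)"
    using lborel_pair.integral_fst'[OF HI] by (simp add: lborel_prod)
  also have "\<dots> = (\<integral>x. F x \<partial>lborel) * (\<integral>y. G y \<partial>lborel)" by (simp add: H_def)
  finally have val: "(\<integral>z. H z \<partial>lborel) = (\<integral>x. F x \<partial>lborel) * (\<integral>y. G y \<partial>lborel)" .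
  have "(H has_integral (\<integral>z. H z \<partial>lborel)) UNIV" by (rule has_integral_integral_lborel[OF int])
  moreover have "H = (\<lambda>z. if z \<in> {a..b} \<times> {c..d} then f (fst z) * g (snd z) else 0)"
    by (auto simp: H_def F_def G_def indicator_def fun_eq_iff)
  ultimately have "((\<lambda>z. f (fst z) * g (snd z)) has_integral (\<integral>z. H z \<partial>lborel)) ({a..b} \<times> {c..d})"
    using has_integral_restrict_UNIV[of "{a..b} \<times> {c..d}" "\<lambda>z. f (fst z) * g (snd z)"] by simp
  then show ?thesis by (simp only: val F(2) G(2))
qed

lemma bspline_measurable: "bspline t hi m i \<in> borel_measurable borel"
proof (induction m arbitrary: i)
  case 0
  show ?case by simp measurable
next
  case (Suc m)
  note Suc.IH[measurable]
  show ?case unfolding bspline.simps(2)[abs_def] by measurable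
qed

lemma zbspline_measurable: "zbspline t hi k i \<in> borel_measurable borel"
  unfolding zbspline_def
  by (intro borel_measurable_times borel_measurable_diff borel_measurable_divide bspline_measurable borel_measurable_const)

text \<open>On the knot interval \<open>[t r, t (r + 1)]\<close> a B-spline agrees with the polynomial obtained from
  the Cox--de Boor recursion by replacing the degree-0 B-splines with the indicator of \<open>r\<close>.\<close>
fun bspline_piece :: "(int \<Rightarrow> real) \<Rightarrow> int \<Rightarrow> nat \<Rightarrow> int \<Rightarrow> real \<Rightarrow> real" where
  "bspline_piece t r 0 i x = (if i = r then 1 else 0)"
| "bspline_piece t r (Suc m) i x =
     (x - t i) / (t (i + int m + 1) - t i) * bspline_piece t r m i x
     + (t (i + int m + 2) - x) / (t (i + int m + 2) - t (i + 1)) * bspline_piece t r m (i + 1) x"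

lemma bspline_piece_derivative:
  assumes "mono t"
  shows "(bspline_piece t r (Suc m) i has_real_derivative
           real (Suc m) * (bspline_piece t r m i x / (t (i + int m + 1) - t i)
                           - bspline_piece t r m (i + 1) x / (t (i + int m + 2) - t (i + 1)))) (at x)"
proof (induction m arbitrary: i)
  case 0
  define c0 c1 :: real where "c0 = (if i = r then 1 else 0) / (t (i + 1) - t i)"
    and "c1 = (if i + 1 = r then 1 else 0) / (t (i + 2) - t (i + 1))"
  have "bspline_piece t r (Suc 0) i = (\<lambda>y. (y - t i) * c0 + (t (i + 2) - y) * c1)"
    by (rule ext) (simp add: c0_def c1_def)
  moreover have "((\<lambda>y. (y - t i) * c0 + (t (i + 2) - y) * c1) has_real_derivative c0 - c1) (at x)"
    by (auto intro!: derivative_eq_intros)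
  ultimately show ?case by (simp add: c0_def c1_def)
next
  case (Suc m)
  let ?P = "bspline_piece t r" and ?n = "real (Suc m)"
  define p0 p1 p2 q0 q1 q2 where "p0 = t i" and "p1 = t (i + 1)" and "p2 = t (i + 2)"
    and "q0 = t (i + int m + 1)" and "q1 = t (i + int m + 2)" and "q2 = t (i + int m + 3)"
  define d0 d1 where "d0 = 1 / (q1 - p0)" and "d1 = 1 / (q2 - p1)"
  define u w where "u = ?P m i x / (q0 - p0) - ?P m (i + 1) x / (q1 - p1)"
    and "w = ?P m (i + 1) x / (q1 - p1) - ?P m (i + 2) x / (q2 - p2)"
  have knots: "t (i + int (Suc m) + 1) = q1" "t (i + int (Suc m) + 2) = q2"
     "t (i + 1 + int m + 1) = q1" "t (i + 1 + int m + 2) = q2" "t (i + 1 + 1) = p2"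
    unfolding q1_def q2_def p2_def by (rule arg_cong[where f=t]; simp)+
  have i2: "i + 1 + 1 = i + 2" by simp
  have IH: "(?P (Suc m) i has_real_derivative ?n * u) (at x)"
    "(?P (Suc m) (i + 1) has_real_derivative ?n * w) (at x)"
    using Suc.IH[of i] Suc.IH[of "i + 1"] unfolding u_def w_def
    by (simp_all only: knots i2 flip: p0_def p1_def p2_def q0_def q1_def)
  have rec: "?P (Suc (Suc m)) i = (\<lambda>y. (y - p0) * d0 * ?P (Suc m) i y + (q2 - y) * d1 * ?P (Suc m) (i + 1) y)"
    by (rule ext) (simp only: bspline_piece.simps knots p0_def p1_def d0_def d1_def, simp)
  have ident: "(x - p0) * d0 * u + (q2 - x) * d1 * w = ?P (Suc m) i x * d0 - ?P (Suc m) (i + 1) x * d1"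
  proof -
    have mono: "p0 \<le> p1" "p1 \<le> q0" "q0 \<le> q1" "q1 \<le> q2" "p1 \<le> p2" "p2 \<le> q1"
      unfolding p0_def p1_def p2_def q0_def q1_def q2_def by (simp_all add: monoD[OF assms])
    have "?P (Suc m) i x = (x - p0) / (q0 - p0) * ?P m i x + (q1 - x) / (q1 - p1) * ?P m (i + 1) x"
      "?P (Suc m) (i + 1) x = (x - p1) / (q1 - p1) * ?P m (i + 1) x + (q2 - x) / (q2 - p2) * ?P m (i + 2) x"
      by (simp_all only: bspline_piece.simps knots i2 flip: p0_def p1_def p2_def q0_def q1_def)
    with bspline_derivative_identity[OF mono, of x "?P m i x" "?P m (i + 1) x" "?P m (i + 2) x"]
    show ?thesis unfolding d0_def d1_def u_def w_def by simp
  qed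
  have "d0 * ?P (Suc m) i x + ?n * u * ((x - p0) * d0) + (- d1 * ?P (Suc m) (i + 1) x + ?n * w * ((q2 - x) * d1))
      = (?P (Suc m) i x * d0 - ?P (Suc m) (i + 1) x * d1) + ?n * ((x - p0) * d0 * u + (q2 - x) * d1 * w)"
    by (simp only: algebra_simps)
  also have "\<dots> = real (Suc (Suc m)) * (?P (Suc m) i x * d0 - ?P (Suc m) (i + 1) x * d1)"
    unfolding ident by (simp add: algebra_simps del: bspline_piece.simps)
  finally have "d0 * ?P (Suc m) i x + ?n * u * ((x - p0) * d0) + (- d1 * ?P (Suc m) (i + 1) x + ?n * w * ((q2 - x) * d1))
      = real (Suc (Suc m)) * (?P (Suc m) i x * d0 - ?P (Suc m) (i + 1) x * d1)" .
  moreover have "((\<lambda>y. (y - p0) * d0 * ?P (Suc m) i y + (q2 - y) * d1 * ?P (Suc m) (i + 1) y) has_real_derivative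
      d0 * ?P (Suc m) i x + ?n * u * ((x - p0) * d0) + (- d1 * ?P (Suc m) (i + 1) x + ?n * w * ((q2 - x) * d1))) (at x)"
    by (intro DERIV_add DERIV_mult IH) (auto intro!: derivative_eq_intros)
  ultimately have "(?P (Suc (Suc m)) i has_real_derivative
      real (Suc (Suc m)) * (?P (Suc m) i x * d0 - ?P (Suc m) (i + 1) x * d1)) (at x)"
    unfolding rec by (simp only:)
  then show ?case
    unfolding knots by (simp add: d0_def d1_def p0_def p1_def del: bspline_piece.simps)
qed

definition zb_or_one :: "(int \<Rightarrow> real) \<Rightarrow> real \<Rightarrow> nat \<Rightarrow> nat \<Rightarrow> int \<Rightarrow> real \<Rightarrow> real" where
  "zb_or_one t hi g K i x = (if i = int g then 1 else zbspline t hi K i x)"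

definition zb_or_one_coeff :: "(int \<Rightarrow> real) \<Rightarrow> nat \<Rightarrow> nat \<Rightarrow> int \<Rightarrow> int \<Rightarrow> real" where
  "zb_or_one_coeff t g K i p = (if i = int g then 1 else
     (real K + 1) * ((if p = i then 1 / (t (i + int K + 1) - t i) else 0)
                    - (if p = i + 1 then 1 / (t (i + int K + 2) - t (i + 1)) else 0)))"

locale clamped_knots =
  fixes t :: "int \<Rightarrow> real" and g :: nat and lo hi :: real
  assumes knot_lo: "\<And>j. j \<le> 0 \<Longrightarrow> t j = lo"
  and knot_hi: "\<And>j. int g + 1 \<le> j \<Longrightarrow> t j = hi"
  and knot_strict: "\<And>i j. 0 \<le> i \<Longrightarrow> i < j \<Longrightarrow> j \<le> int g + 1 \<Longrightarrow> t i < t j"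
begin

abbreviation B where "B \<equiv> bspline t hi"

lemma knot_clamp: "t i = t (max 0 (min (int g + 1) i))"
  by (cases "i \<le> 0"; cases "int g + 1 \<le> i") (auto simp: knot_lo knot_hi max_def min_def)

lemma knot_mono: "i \<le> j \<Longrightarrow> t i \<le> t j"
proof -
  assume "i \<le> j"
  let ?ci = "max 0 (min (int g + 1) i)" and ?cj = "max 0 (min (int g + 1) j)"
  have "?ci \<le> ?cj" using \<open>i \<le> j\<close> by auto
  have "t ?ci \<le> t ?cj"
  proof (cases "?ci = ?cj")
    case True then show ?thesis by (simp only:)
  next
    case False
    with \<open>?ci \<le> ?cj\<close> have "?ci < ?cj" by linarith
    moreover have "0 \<le> ?ci" "?cj \<le> int g + 1" by auto
    ultimately show ?thesis using knot_strict[of ?ci ?cj] by linarith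
  qed
  then show ?thesis by (metis knot_clamp)
qed

lemma mono_knots: "mono t"
  by (rule monoI) (rule knot_mono)

lemma lo_less_hi: "lo < hi"
  using knot_strict[of 0 "int g + 1"] knot_lo[of 0] knot_hi[of "int g + 1"] by simp

lemma knot_le_hi: "t j \<le> hi"
  using knot_mono[of j "max j (int g + 1)"] knot_hi[of "max j (int g + 1)"] by simp

lemma knot_ge_lo: "lo \<le> t j"
  using knot_mono[of "min j 0" j] knot_lo[of "min j 0"] by simp

lemma bspline_coincident_knots: "t i = t (i + int m + 1) \<Longrightarrow> B m i x = 0"
proof (induction m arbitrary: i)
  case 0
  then show ?case by simp
next
  case (Suc m)
  have e: "t (i + int (Suc m) + 1) = t (i + int m + 2)" by (rule arg_cong[where f=t]) simp
  have a1: "t i \<le> t (i + int m + 1)" by (rule knot_mono) simp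
  have a2: "t (i + int m + 1) \<le> t (i + int m + 2)" by (rule knot_mono) simp
  have a3: "t i \<le> t (i + 1)" by (rule knot_mono) simp
  have a4: "t (i + 1) \<le> t (i + int m + 2)" by (rule knot_mono) simp
  have c1: "t i = t (i + int m + 1)" using Suc.prems e a1 a2 by linarith
  have c2: "t (i + 1) = t (i + 1 + int m + 1)"
  proof -
    have "t (i + 1 + int m + 1) = t (i + int m + 2)" by (rule arg_cong[where f=t]) simp
    then show ?thesis using Suc.prems e a3 a4 a1 a2 by linarith
  qed
  show ?case using Suc.IH[OF c1] Suc.IH[OF c2] by simp
qed

lemma bspline_support: "B m i x \<noteq> 0 \<Longrightarrow> t i \<le> x \<and> x \<le> t (i + int m + 1)"
proof (induction m arbitrary: i)
  case 0
  then show ?case by (auto split: if_splits)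
next
  case (Suc m)
  have e: "t (i + int (Suc m) + 1) = t (i + int m + 2)" by (rule arg_cong[where f=t]) simp
  have e2: "t (i + 1 + int m + 1) = t (i + int m + 2)" by (rule arg_cong[where f=t]) simp
  have a2: "t (i + int m + 1) \<le> t (i + int m + 2)" by (rule knot_mono) simp
  have a3: "t i \<le> t (i + 1)" by (rule knot_mono) simp
  from Suc.prems have "B m i x \<noteq> 0 \<or> B m (i + 1) x \<noteq> 0" by auto
  then show ?case
  proof
    assume "B m i x \<noteq> 0"
    from Suc.IH[OF this] show ?thesis using e a2 by auto
  next
    assume "B m (i + 1) x \<noteq> 0"
    from Suc.IH[OF this] show ?thesis using e e2 a3 by auto
  qed
qed

lemma bspline_left_term_nonneg:
  assumes "0 \<le> B m i x"
  shows "0 \<le> (x - t i) / (t (i + int m + 1) - t i) * B m i x"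
proof (cases "B m i x = 0")
  case False
  then have "t i \<le> x" using bspline_support by blast
  moreover have "t i \<le> t (i + int m + 1)" by (rule knot_mono) simp
  ultimately show ?thesis using assms by (intro mult_nonneg_nonneg divide_nonneg_nonneg) auto
qed simp

lemma bspline_right_term_nonneg:
  assumes "0 \<le> B m (i + 1) x"
  shows "0 \<le> (t (i + int m + 2) - x) / (t (i + int m + 2) - t (i + 1)) * B m (i + 1) x"
proof (cases "B m (i + 1) x = 0")
  case False
  have "t (i + 1 + int m + 1) = t (i + int m + 2)" by (rule arg_cong[where f=t]) simp
  then have "x \<le> t (i + int m + 2)" using bspline_support[of m "i + 1" x] False by auto
  moreover have "t (i + 1) \<le> t (i + int m + 2)" by (rule knot_mono) simp
  ultimately show ?thesis using assms by (intro mult_nonneg_nonneg divide_nonneg_nonneg) auto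
qed simp

lemma bspline_nonneg: "0 \<le> B m i x"
proof (induction m arbitrary: i)
  case (Suc m)
  show ?case unfolding bspline.simps(2)
    by (intro add_nonneg_nonneg bspline_left_term_nonneg bspline_right_term_nonneg Suc.IH)
qed simp

lemma bspline_pos:
  "i \<le> j \<Longrightarrow> j \<le> i + int m \<Longrightarrow> t j < x \<Longrightarrow> x < t (j + 1) \<Longrightarrow> 0 < B m i x"
proof (induction m arbitrary: i)
  case 0
  then have "j = i" by simp
  then show ?case using 0 by simp
next
  case (Suc m)
  have 1: "0 \<le> (x - t i) / (t (i + int m + 1) - t i) * B m i x"
    by (rule bspline_left_term_nonneg[OF bspline_nonneg])
  have 2: "0 \<le> (t (i + int m + 2) - x) / (t (i + int m + 2) - t (i + 1)) * B m (i + 1) x"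
    by (rule bspline_right_term_nonneg[OF bspline_nonneg])
  show ?case
  proof (cases "j \<le> i + int m")
    case True
    have p: "0 < B m i x" by (rule Suc.IH) (use Suc.prems True in auto)
    have "t i \<le> t j" "t (j + 1) \<le> t (i + int m + 1)" using Suc.prems True by (auto intro: knot_mono)
    then have "0 < (x - t i) / (t (i + int m + 1) - t i)" using Suc.prems by auto
    then show ?thesis using p 2 by (simp only: bspline.simps) (rule add_pos_nonneg[OF mult_pos_pos])
  next
    case False
    have p: "0 < B m (i + 1) x" by (rule Suc.IH) (use Suc.prems False in auto)
    have "t (i + 1) \<le> t j" "t (j + 1) \<le> t (i + int m + 2)" using Suc.prems False by (auto intro: knot_mono)
    then have "0 < (t (i + int m + 2) - x) / (t (i + int m + 2) - t (i + 1))" using Suc.prems by auto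
    then show ?thesis using p 1 by (simp only: bspline.simps) (rule add_nonneg_pos[OF _ mult_pos_pos])
  qed
qed

lemma knot_interval_containing:
  "lo \<le> x \<Longrightarrow> x \<le> hi \<Longrightarrow> \<exists>r. 0 \<le> r \<and> r \<le> int g \<and> t r \<le> x \<and> (x < t (r + 1) \<or> r = int g)"
proof -
  assume x: "lo \<le> x" "x \<le> hi"
  define R where "R = {r \<in> {0..int g}. t r \<le> x}"
  have fin: "finite R" unfolding R_def by (rule finite_subset[where B="{0..int g}"]) auto
  have "0 \<in> R" unfolding R_def using x knot_lo[of 0] by simp
  then have ne: "R \<noteq> {}" by auto
  define r where "r = Max R"
  have rR: "r \<in> R" unfolding r_def using fin ne by simp
  then have r1: "0 \<le> r" "r \<le> int g" "t r \<le> x" unfolding R_def by auto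
  have "x < t (r + 1) \<or> r = int g"
  proof (rule ccontr)
    assume "\<not> (x < t (r + 1) \<or> r = int g)"
    then have "r + 1 \<in> R" unfolding R_def using r1 by auto
    then have "r + 1 \<le> r" unfolding r_def using Max_ge[OF fin] by blast
    then show False by simp
  qed
  then show ?thesis using r1 by blast
qed

lemma bspline0_on_knot_interval:
  "0 \<le> r \<Longrightarrow> r \<le> int g \<Longrightarrow> t r \<le> x \<Longrightarrow> x < t (r + 1) \<Longrightarrow> B 0 j x = (if j = r then 1 else 0)"
proof -
  assume a: "0 \<le> r" "r \<le> int g" "t r \<le> x" "x < t (r + 1)"
  have xhi: "x < hi" using a knot_le_hi[of "r + 1"] by simp
  consider "j = r" | "j < r" | "r < j" by linarith
  then show ?thesis
  proof cases
    case 1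
    then show ?thesis using a knot_strict[of r "r + 1"] by simp
  next
    case 2
    then have "t (j + 1) \<le> t r" by (intro knot_mono) simp
    then show ?thesis using a 2 xhi by auto
  next
    case 3
    then have "t (r + 1) \<le> t j" by (intro knot_mono) simp
    then show ?thesis using a 3 by auto
  qed
qed

lemma bspline0_at_hi: "B 0 j hi = (if j = int g then 1 else 0)"
proof -
  consider "j = int g" | "j < int g" | "int g < j" by linarith
  then show ?thesis
  proof cases
    case 1
    then show ?thesis using knot_strict[of "int g" "int g + 1"] knot_hi[of "int g + 1"] by simp
  next
    case 2
    then have "t (j + 1) \<le> t (int g)" by (intro knot_mono) simp
    moreover have "t (int g) < hi" using knot_strict[of "int g" "int g + 1"] knot_hi[of "int g + 1"] by simp
    ultimately show ?thesis using 2 by auto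
  next
    case 3
    then show ?thesis using knot_hi[of j] knot_hi[of "j + 1"] by simp
  qed
qed

lemma bspline_eq_piece:
  "0 \<le> r \<Longrightarrow> r \<le> int g \<Longrightarrow> t r \<le> x \<Longrightarrow> x < t (r + 1) \<Longrightarrow> B m i x = bspline_piece t r m i x"
proof (induction m arbitrary: i)
  case 0
  show ?case using bspline0_on_knot_interval[OF 0] by (simp del: bspline.simps)
next
  case (Suc m)
  show ?case using Suc.IH[OF Suc.prems] Suc.IH[of "i + 1", OF Suc.prems] by simp
qed

lemma bspline_eq_piece_at_hi: "B m i hi = bspline_piece t (int g) m i hi"
proof (induction m arbitrary: i)
  case 0
  show ?case using bspline0_at_hi by (simp del: bspline.simps)
next
  case (Suc m)
  show ?case using Suc.IH[of i] Suc.IH[of "i + 1"] by simp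
qed

lemma bspline_piece_agree_at_knot:
  "0 \<le> r \<Longrightarrow> r < int g \<Longrightarrow>
   bspline_piece t r (Suc m) i (t (r + 1)) = bspline_piece t (r + 1) (Suc m) i (t (r + 1))"
proof (induction m arbitrary: i)
  case 0
  then have "t r < t (r + 1)" "t (r + 1) < t (r + 2)" using knot_strict by auto
  then show ?case by (auto simp: add.commute)
next
  case (Suc m)
  then show ?case by (simp only: bspline_piece.simps)
qed

lemma bspline_eq_piece_closed:
  assumes r: "0 \<le> r" "r \<le> int g" and x: "t r \<le> x" "x \<le> t (r + 1)"
  shows "B (Suc m) i x = bspline_piece t r (Suc m) i x"
proof (cases "x < t (r + 1)")
  case True
  then show ?thesis using r x bspline_eq_piece by blast
next
  case False
  then have x_eq: "x = t (r + 1)" using x by simp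
  show ?thesis
  proof (cases "r = int g")
    case True
    then show ?thesis using x_eq knot_hi bspline_eq_piece_at_hi by simp
  next
    case False
    then have "r < int g" using r by simp
    have "B (Suc m) i x = bspline_piece t (r + 1) (Suc m) i x"
      by (rule bspline_eq_piece) (use r \<open>r < int g\<close> x_eq knot_strict[of "r + 1" "r + 2"] in \<open>auto simp: add.assoc\<close>)
    also have "\<dots> = bspline_piece t r (Suc m) i x"
      using bspline_piece_agree_at_knot[OF r(1) \<open>r < int g\<close>] x_eq by simp
    finally show ?thesis .
  qed
qed

lemma continuous_on_bspline_piece: "continuous_on A (bspline_piece t r m i)"
proof (induction m arbitrary: i)
  case (Suc m)
  show ?case unfolding bspline_piece.simps(2)[abs_def] divide_inverse by (intro continuous_intros Suc.IH)
qed simp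

lemma knot_intervals_cover: "{lo..hi} = (\<Union>r\<in>{0..int g}. {t r..t (r + 1)})"
proof
  show "{lo..hi} \<subseteq> (\<Union>r\<in>{0..int g}. {t r..t (r + 1)})"
  proof
    fix x assume "x \<in> {lo..hi}"
    then obtain r where r: "0 \<le> r" "r \<le> int g" "t r \<le> x" "x < t (r + 1) \<or> r = int g"
      using knot_interval_containing by auto
    have "x \<le> t (r + 1)" using r \<open>x \<in> {lo..hi}\<close> knot_hi[of "r + 1"] by auto
    then show "x \<in> (\<Union>r\<in>{0..int g}. {t r..t (r + 1)})" using r by auto
  qed
  show "(\<Union>r\<in>{0..int g}. {t r..t (r + 1)}) \<subseteq> {lo..hi}"
  proof clarify
    fix x r assume "x \<in> {t r..t (r + 1)}"
    then show "x \<in> {lo..hi}" using knot_ge_lo[of r] knot_le_hi[of "r + 1"] by auto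
  qed
qed

lemma continuous_on_bspline: "continuous_on {lo..hi} (B (Suc m) i)"
  unfolding knot_intervals_cover
proof (rule continuous_on_closed_Union)
  fix r assume r: "r \<in> {0..int g}"
  show "continuous_on {t r..t (r + 1)} (B (Suc m) i)"
    by (rule continuous_on_eq[OF continuous_on_bspline_piece[of _ r "Suc m" i]])
      (use r in \<open>auto simp del: bspline.simps simp: bspline_eq_piece_closed\<close>)
qed auto

lemma bspline_derivative:
  assumes r: "0 \<le> r" "r \<le> int g" and x: "t r < x" "x < t (r + 1)"
  shows "(B (Suc m) i has_real_derivative zbspline t hi m i x) (at x)"
proof -
  have "bspline_piece t r m j x = B m j x" for j
    using bspline_eq_piece[of r x m j] r x by simp
  then have "(bspline_piece t r (Suc m) i has_real_derivative zbspline t hi m i x) (at x)"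
    using bspline_piece_derivative[OF mono_knots, of r m i x] by (simp add: zbspline_def add.commute)
  then show ?thesis
  proof (rule has_field_derivative_transform_within_open)
    show "open {t r<..<t (r + 1)}" "x \<in> {t r<..<t (r + 1)}" using x by simp_all
    fix y assume "y \<in> {t r<..<t (r + 1)}"
    then show "bspline_piece t r (Suc m) i y = B (Suc m) i y" using bspline_eq_piece[of r y "Suc m" i] r by simp
  qed
qed

lemma bspline_at_first_knot: "t i < t (i + int m) \<Longrightarrow> B m i (t i) = 0"
proof (induction m arbitrary: i)
  case 0
  then show ?case by simp
next
  case (Suc m)
  have "B m (i + 1) (t i) = 0"
  proof (cases "t i < t (i + 1)")
    case True
    then show ?thesis using bspline_support[of m "i + 1" "t i"] by auto
  next
    case False
    then have e: "t (i + 1) = t i" using knot_mono[of i "i + 1"] by simp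
    have "t (i + int (Suc m)) = t (i + 1 + int m)" by (rule arg_cong[where f=t]) simp
    then have "t (i + 1) < t (i + 1 + int m)" using Suc.prems e by simp
    from Suc.IH[OF this] e show ?thesis by simp
  qed
  then show ?case by simp
qed

lemma bspline_vanishes_at_hi: "t (i + 1) < hi \<Longrightarrow> hi \<le> t (i + int m + 1) \<Longrightarrow> B m i hi = 0"
proof (induction m arbitrary: i)
  case 0
  then show ?case by simp
next
  case (Suc m)
  have "t (i + int (Suc m) + 1) = t (i + int m + 2)" by (rule arg_cong[where f=t]) simp
  then have e: "t (i + int m + 2) = hi" using Suc.prems knot_le_hi[of "i + int m + 2"] by simp
  have "B m i hi = 0"
  proof (cases "hi \<le> t (i + int m + 1)")
    case True
    then show ?thesis using Suc.IH Suc.prems by blast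
  next
    case False
    then show ?thesis using bspline_support[of m i hi] by auto
  qed
  then show ?case using e by simp
qed

lemma bspline_Suc_lo_eq_0: "- int m \<le> i \<Longrightarrow> B (Suc m) i lo = 0"
proof (cases "t i = lo")
  case True
  assume i: "- int m \<le> i"
  have "t 1 \<le> t (i + int (Suc m))" by (rule knot_mono) (use i in simp)
  moreover have "lo < t 1" using knot_strict[of 0 1] knot_lo[of 0] by simp
  ultimately have "t i < t (i + int (Suc m))" using True by simp
  then show ?thesis using bspline_at_first_knot True by metis
next
  case False
  then have "lo < t i" using knot_ge_lo[of i] by simp
  then show ?thesis using bspline_support[of "Suc m" i lo] by auto
qed

lemma bspline_Suc_hi_eq_0: "i \<le> int g - 1 \<Longrightarrow> B (Suc m) i hi = 0"
proof -
  assume i: "i \<le> int g - 1"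
  have "t (i + 1) \<le> t (int g)" by (rule knot_mono) (use i in simp)
  moreover have "t (int g) < hi" using knot_strict[of "int g" "int g + 1"] knot_hi[of "int g + 1"] by simp
  ultimately have lt: "t (i + 1) < hi" by simp
  show ?thesis
  proof (cases "hi \<le> t (i + int (Suc m) + 1)")
    case True
    then show ?thesis using bspline_vanishes_at_hi lt by blast
  next
    case False
    then show ?thesis using bspline_support[of "Suc m" i hi] by auto
  qed
qed

lemma zbspline_has_integral:
  "(zbspline t hi m i has_integral B (Suc m) i hi - B (Suc m) i lo) {lo..hi}"
proof (rule fundamental_theorem_of_calculus_interior_strong[where S = "t ` {0..int g + 1}"])
  show "finite (t ` {0..int g + 1})" "lo \<le> hi" using lo_less_hi by simp_all
  show "continuous_on {lo..hi} (B (Suc m) i)" by (rule continuous_on_bspline)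
  fix x assume x: "x \<in> {lo<..<hi} - t ` {0..int g + 1}"
  then obtain r where r: "0 \<le> r" "r \<le> int g" "t r \<le> x" "x < t (r + 1) \<or> r = int g"
    using knot_interval_containing[of x] by auto
  have "t r < x" "x < t (r + 1)" using r x knot_hi[of "r + 1"] by (auto simp: order.order_iff_strict)
  with r show "(B (Suc m) i has_vector_derivative zbspline t hi m i x) (at x)"
    using bspline_derivative by (simp add: has_real_derivative_iff_has_vector_derivative)
qed

lemma sum_bspline0:
  "lo \<le> x \<Longrightarrow> x \<le> hi \<Longrightarrow> (\<Sum>i\<in>{- int K..int g}. B 0 i x) = 1"
proof -
  assume x: "lo \<le> x" "x \<le> hi"
  then obtain r where r: "0 \<le> r" "r \<le> int g" "t r \<le> x" "x < t (r + 1) \<or> r = int g"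
    using knot_interval_containing by blast
  have "B 0 i x = (if i = r then 1 else 0)" for i
  proof (cases "x < t (r + 1)")
    case True
    then show ?thesis using bspline0_on_knot_interval r by blast
  next
    case False
    then have "r = int g" "x = hi" using r x knot_hi[of "r + 1"] by auto
    then show ?thesis using bspline0_at_hi by simp
  qed
  then show ?thesis using r by (simp del: bspline.simps)
qed

lemma sum_bspline_Suc:
  assumes "Suc m \<le> K"
  shows "(\<Sum>i\<in>{- int K..int g}. B (Suc m) i x) = (\<Sum>i\<in>{- int K..int g}. B m i x)"
proof -
  let ?I = "{- int K..int g}"
  define w where "w j = (x - t j) / (t (j + int m + 1) - t j)" for j
  define v where "v j = (t (j + int m + 1) - x) / (t (j + int m + 1) - t j)" for j
  have "(t (i + int m + 2) - x) / (t (i + int m + 2) - t (i + 1)) = v (i + 1)" for i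
    unfolding v_def by (simp add: add.assoc add.commute add.left_commute)
  then have "(\<Sum>i\<in>?I. B (Suc m) i x) = (\<Sum>i\<in>?I. w i * B m i x) + (\<Sum>i\<in>?I. v (i + 1) * B m (i + 1) x)"
    by (simp add: w_def sum.distrib del: bspline.simps(1))
  also have "(\<Sum>i\<in>?I. v (i + 1) * B m (i + 1) x) = (\<Sum>j\<in>{- int K + 1..int g + 1}. v j * B m j x)"
    by (rule sum_int_shift)
  also have "\<dots> = (\<Sum>j\<in>?I. v j * B m j x)"
  proof -
    have z1: "B m (- int K) x = 0"
      by (rule bspline_coincident_knots) (use assms knot_lo in simp)
    have z2: "B m (int g + 1) x = 0"
      by (rule bspline_coincident_knots) (simp add: knot_hi)
    have I1: "{- int K..int g + 1} = insert (- int K) {- int K + 1..int g + 1}" by auto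
    have I2: "{- int K..int g + 1} = insert (int g + 1) ?I" by auto
    have "(\<Sum>j\<in>{- int K + 1..int g + 1}. v j * B m j x) = (\<Sum>j\<in>{- int K..int g + 1}. v j * B m j x)"
      unfolding I1 using z1 by simp
    also have "\<dots> = (\<Sum>j\<in>?I. v j * B m j x)"
      unfolding I2 using z2 by simp
    finally show ?thesis .
  qed
  also have "(\<Sum>i\<in>?I. w i * B m i x) + (\<Sum>j\<in>?I. v j * B m j x) = (\<Sum>j\<in>?I. B m j x)"
    unfolding sum.distrib[symmetric]
  proof (rule sum.cong[OF refl])
    fix j
    show "w j * B m j x + v j * B m j x = B m j x"
    proof (cases "t (j + int m + 1) = t j")
      case False
      then have "w j + v j = 1" unfolding w_def v_def by (simp add: add_divide_distrib[symmetric])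
      then show ?thesis by (metis distrib_right mult_1)
    qed (use bspline_coincident_knots[of j m x] in simp)
  qed
  finally show ?thesis .
qed

lemma bspline_partition_of_unity:
  "m \<le> K \<Longrightarrow> lo \<le> x \<Longrightarrow> x \<le> hi \<Longrightarrow> (\<Sum>i\<in>{- int K..int g}. B m i x) = 1"
  by (induction m) (simp_all add: sum_bspline0 sum_bspline_Suc del: bspline.simps)

lemma bspline_le_1:
  "- int K \<le> i \<Longrightarrow> i \<le> int g \<Longrightarrow> lo \<le> x \<Longrightarrow> x \<le> hi \<Longrightarrow> B K i x \<le> 1"
proof -
  assume a: "- int K \<le> i" "i \<le> int g" "lo \<le> x" "x \<le> hi"
  have "B K i x \<le> (\<Sum>j\<in>{- int K..int g}. B K j x)"
    by (rule member_le_sum) (use a bspline_nonneg in auto)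
  then show ?thesis using bspline_partition_of_unity[of K K x] a by simp
qed

lemma bspline_piece_eq_0_above: "r < i \<Longrightarrow> bspline_piece t r m i x = 0"
  by (induction m arbitrary: i) auto

lemma bspline_piece_positive_zero_order_at_lo:
  "- int m \<le> i \<Longrightarrow> i \<le> 0 \<Longrightarrow> positive_zero_order (bspline_piece t 0 m i) lo (nat (i + int m))"
proof (induction m arbitrary: i)
  case 0
  then show ?case by (auto simp: positive_zero_order_def intro!: exI[of _ "\<lambda>_. 1"])
next
  case (Suc m)
  have t1: "lo < t 1" using knot_strict[of 0 1] knot_lo[of 0] by simp
  define h where "h x = (t (i + int m + 2) - x) / (t (i + int m + 2) - t (i + 1))" for x
  have h: "continuous_on UNIV h" unfolding h_def divide_inverse by (intro continuous_intros)
  have rec: "bspline_piece t 0 (Suc m) i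
      = (\<lambda>x. (x - lo) / (t (i + int m + 1) - lo) * bspline_piece t 0 m i x + h x * bspline_piece t 0 m (i + 1) x)"
    using knot_lo[of i] Suc.prems by (auto simp: h_def)
  consider "i = - int m - 1" | "- int m \<le> i" "i \<le> - 1" | "i = 0" using Suc.prems by linarith
  then show ?case
  proof cases
    case 1
    then have "t (i + int m + 1) = lo" "h lo = 1" "nat (i + int (Suc m)) = nat (i + 1 + int m)"
      using t1 knot_lo[of "i + 1"] by (auto simp: knot_lo h_def)
    with rec h Suc.IH[of "i + 1"] 1 show ?thesis by (simp add: positive_zero_order_mult)
  next
    case 2
    have "t 1 \<le> t (i + int m + 1)" "t 1 \<le> t (i + int m + 2)" using 2 by (auto intro: knot_mono)
    then have D: "0 < t (i + int m + 1) - lo" and h_lo: "0 < h lo"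
      using t1 2 knot_lo[of "i + 1"] by (auto simp: h_def)
    have n: "nat (i + int (Suc m)) = Suc (nat (i + int m))" "nat (i + 1 + int m) = Suc (nat (i + int m))"
      using 2 by auto
    have IH: "positive_zero_order (bspline_piece t 0 m i) lo (nat (i + int m))"
      "positive_zero_order (bspline_piece t 0 m (i + 1)) lo (Suc (nat (i + int m)))"
      using Suc.IH[of i] Suc.IH[of "i + 1"] 2 by (simp_all add: n)
    show ?thesis unfolding rec n(1)
      by (intro positive_zero_order_add positive_zero_order_Suc positive_zero_order_mult IH h D h_lo)
  next
    case 3
    have "t 1 \<le> t (int m + 1)" by (rule knot_mono) simp
    then have "0 < t (int m + 1) - lo" using t1 by simp
    then have "positive_zero_order (\<lambda>x. (x - lo) / (t (int m + 1) - lo) * bspline_piece t 0 m 0 x) lo (Suc m)"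
      using Suc.IH[of 0] by (intro positive_zero_order_Suc) simp_all
    moreover have "bspline_piece t 0 (Suc m) i = (\<lambda>x. (x - lo) / (t (int m + 1) - lo) * bspline_piece t 0 m 0 x)"
      unfolding rec using 3 by (simp add: bspline_piece_eq_0_above)
    moreover have "nat (i + int (Suc m)) = Suc m" using 3 by simp
    ultimately show ?thesis by (simp only:)
  qed
qed

lemma bspline_coeffs_zero_left:
  assumes z: "\<And>x. lo < x \<Longrightarrow> x < t 1 \<Longrightarrow> (\<Sum>i\<in>{- int K..int g}. c i * B K i x) = 0"
  shows "\<forall>i\<in>{- int K..0}. c i = 0"
proof -
  have all: "\<forall>r<K + 1. c (int r - int K) = 0"
  proof (rule coeffs_zero_if_positive_zero_orders)
    show "positive_zero_order (bspline_piece t 0 K (int r - int K)) lo r" if "r < K + 1" for r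
      using bspline_piece_positive_zero_order_at_lo[of K "int r - int K"] that by simp
    show "0 < t 1 - lo" using knot_strict[of 0 1] knot_lo[of 0] by simp
    fix x assume x: "lo < x" "x < lo + (t 1 - lo)"
    have "(\<Sum>r<K + 1. c (int r - int K) * bspline_piece t 0 K (int r - int K) x)
        = (\<Sum>i\<in>{- int K..0}. c i * bspline_piece t 0 K i x)"
      by (rule sum.reindex_bij_witness[where i="\<lambda>i. nat (i + int K)" and j="\<lambda>r. int r - int K"]) auto
    also have "\<dots> = (\<Sum>i\<in>{- int K..int g}. c i * bspline_piece t 0 K i x)"
      by (rule sum.mono_neutral_left) (auto simp: bspline_piece_eq_0_above)
    also have "\<dots> = (\<Sum>i\<in>{- int K..int g}. c i * B K i x)"
      using x knot_lo[of 0] by (intro sum.cong refl) (simp add: bspline_eq_piece[of 0 x K])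
    finally show "(\<Sum>r<K + 1. c (int r - int K) * bspline_piece t 0 K (int r - int K) x) = 0"
      using z x by simp
  qed
  show ?thesis
  proof
    fix i assume "i \<in> {- int K..0}"
    then have "nat (i + int K) < K + 1" "int (nat (i + int K)) - int K = i" by auto
    with all show "c i = 0" by metis
  qed
qed

lemma bspline_coeffs_zero:
  assumes z: "\<And>x. lo \<le> x \<Longrightarrow> x \<le> hi \<Longrightarrow> (\<Sum>i\<in>{- int K..int g}. c i * B K i x) = 0"
  shows "\<forall>i\<in>{- int K..int g}. c i = 0"
proof (rule ccontr)
  define S where "S = {i \<in> {- int K..int g}. c i \<noteq> 0}"
  assume "\<not> (\<forall>i\<in>{- int K..int g}. c i = 0)"
  then have "S \<noteq> {}" unfolding S_def by auto
  have "finite S" unfolding S_def by (rule finite_subset[OF _ finite_atLeastAtMost_int]) auto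
  define r where "r = Min S"
  have "r \<in> S" unfolding r_def using \<open>finite S\<close> \<open>S \<noteq> {}\<close> by (rule Min_in)
  then have r: "r \<in> {- int K..int g}" "c r \<noteq> 0" unfolding S_def by auto
  have below: "c j = 0" if "j \<in> {- int K..int g}" "j < r" for j
    using Min_le[OF \<open>finite S\<close>, of j] that unfolding r_def S_def by force
  have "\<forall>i\<in>{- int K..0}. c i = 0"
    using z knot_le_hi[of 1] by (intro bspline_coeffs_zero_left) simp
  with r have "1 \<le> r" by fastforce
  define x where "x = (t r + t (r + 1)) / 2"
  have "t r < t (r + 1)" using knot_strict[of r "r + 1"] \<open>1 \<le> r\<close> r by simp
  then have x: "t r < x" "x < t (r + 1)" unfolding x_def by auto
  have above: "B K i x = 0" if "r < i" for i
    using bspline_support[of K i x] knot_mono[of "r + 1" i] x that by force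
  have "c i * B K i x = (if i = r then c r * B K r x else 0)" if "i \<in> {- int K..int g}" for i
    using below[OF that] above[of i] by (cases i r rule: linorder_cases) auto
  then have "(\<Sum>i\<in>{- int K..int g}. c i * B K i x) = (\<Sum>i\<in>{- int K..int g}. if i = r then c r * B K r x else 0)"
    by (rule sum.cong[OF refl])
  also have "\<dots> = c r * B K r x" using r by simp
  finally have "c r * B K r x = 0"
    using z x knot_ge_lo[of r] knot_le_hi[of "r + 1"] by simp
  moreover have "0 < B K r x" by (rule bspline_pos[of r r]) (use x in auto)
  ultimately show False using r by simp
qed

lemma knot_span_pos: "- int K \<le> p \<Longrightarrow> p \<le> int g \<Longrightarrow> 0 < t (p + int K + 1) - t p"
proof -
  assume p: "- int K \<le> p" "p \<le> int g"
  define q where "q = max p 0"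
  have "t p \<le> t q" unfolding q_def by (rule knot_mono) simp
  moreover have "t q < t (q + 1)" using knot_strict[of q "q + 1"] p unfolding q_def by simp
  moreover have "t (q + 1) \<le> t (p + int K + 1)" unfolding q_def by (rule knot_mono) (use p in simp)
  ultimately show ?thesis by simp
qed

lemma zbspline_has_integral_0:
  "- int K \<le> i \<Longrightarrow> i \<le> int g - 1 \<Longrightarrow> (zbspline t hi K i has_integral 0) {lo..hi}"
  using zbspline_has_integral[of K i] by (simp add: bspline_Suc_lo_eq_0 bspline_Suc_hi_eq_0 del: bspline.simps)

lemma zbspline_bounded: "- int K \<le> i \<Longrightarrow> i \<le> int g - 1 \<Longrightarrow> x \<in> {lo..hi} \<Longrightarrow>
  \<bar>zbspline t hi K i x\<bar> \<le> (real K + 1) * (1 / (t (i + int K + 1) - t i) + 1 / (t (i + int K + 2) - t (i + 1)))"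
proof -
  assume i: "- int K \<le> i" "i \<le> int g - 1" and x: "x \<in> {lo..hi}"
  define D0 where "D0 = t (i + int K + 1) - t i"
  define D1 where "D1 = t (i + int K + 2) - t (i + 1)"
  have D0: "0 < D0" unfolding D0_def by (rule knot_span_pos) (use i in auto)
  have "0 < t (i + 1 + int K + 1) - t (i + 1)" by (rule knot_span_pos) (use i in auto)
  moreover have "t (i + 1 + int K + 1) = t (i + int K + 2)" by (rule arg_cong[where f=t]) simp
  ultimately have D1: "0 < D1" unfolding D1_def by simp
  have b0: "0 \<le> B K i x" "B K i x \<le> 1" using bspline_nonneg bspline_le_1[of K i x] i x by auto
  have b1: "0 \<le> B K (i + 1) x" "B K (i + 1) x \<le> 1" using bspline_nonneg bspline_le_1[of K "i + 1" x] i x by auto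
  have "\<bar>B K i x / D0 - B K (i + 1) x / D1\<bar> \<le> \<bar>B K i x / D0\<bar> + \<bar>B K (i + 1) x / D1\<bar>" by (rule abs_triangle_ineq4)
  also have "\<bar>B K i x / D0\<bar> \<le> 1 / D0" using b0 D0 by (simp add: divide_right_mono)
  also have "\<bar>B K (i + 1) x / D1\<bar> \<le> 1 / D1" using b1 D1 by (simp add: divide_right_mono)
  finally have "\<bar>B K i x / D0 - B K (i + 1) x / D1\<bar> \<le> 1 / D0 + 1 / D1" by simp
  then have "(real K + 1) * \<bar>B K i x / D0 - B K (i + 1) x / D1\<bar> \<le> (real K + 1) * (1 / D0 + 1 / D1)"
    by (intro mult_left_mono) auto
  then show ?thesis unfolding zbspline_def D0_def D1_def by (simp add: abs_mult)
qed

lemma zb_or_one_bspline_expansion: "i \<in> {- int K..int g} \<Longrightarrow> lo \<le> x \<Longrightarrow> x \<le> hi \<Longrightarrow>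
   zb_or_one t hi g K i x = (\<Sum>p\<in>{- int K..int g}. zb_or_one_coeff t g K i p * B K p x)"
proof -
  assume i: "i \<in> {- int K..int g}" and x: "lo \<le> x" "x \<le> hi"
  show ?thesis
  proof (cases "i = int g")
    case True
    then show ?thesis unfolding zb_or_one_def zb_or_one_coeff_def using bspline_partition_of_unity[of K K x] x by simp
  next
    case False
    then have i1: "i + 1 \<in> {- int K..int g}" using i by auto
    have "(\<Sum>p\<in>{- int K..int g}. zb_or_one_coeff t g K i p * B K p x)
      = (\<Sum>p\<in>{- int K..int g}. (if p = i then (real K + 1) * B K i x / (t (i + int K + 1) - t i) else 0)
                         - (if p = i + 1 then (real K + 1) * B K (i + 1) x / (t (i + int K + 2) - t (i + 1)) else 0))"
      by (intro sum.cong refl) (auto simp: zb_or_one_coeff_def False divide_inverse algebra_simps simp del: bspline.simps)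
    also have "\<dots> = (real K + 1) * B K i x / (t (i + int K + 1) - t i) - (real K + 1) * B K (i + 1) x / (t (i + int K + 2) - t (i + 1))"
      using i i1 by (simp only: sum_subtractf sum.delta finite_atLeastAtMost if_True)
    also have "\<dots> = zb_or_one t hi g K i x"
      unfolding zb_or_one_def zbspline_def using False by (simp add: algebra_simps del: bspline.simps)
    finally show ?thesis by simp
  qed
qed

lemma zb_or_one_has_integral:
  "i \<in> {- int K..int g} \<Longrightarrow> (zb_or_one t hi g K i has_integral (if i = int g then hi - lo else 0)) {lo..hi}"
proof (cases "i = int g")
  case True
  then show ?thesis unfolding zb_or_one_def using has_integral_const_real[of "1::real" lo hi] lo_less_hi by simp
next
  case False
  assume i: "i \<in> {- int K..int g}"
  then have "(zbspline t hi K i has_integral 0) {lo..hi}" using False by (intro zbspline_has_integral_0) auto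
  then show ?thesis unfolding zb_or_one_def using False by simp
qed

lemma zb_or_one_measurable: "zb_or_one t hi g K i \<in> borel_measurable borel"
  unfolding zb_or_one_def by (cases "i = int g") (simp_all add: zbspline_measurable)

lemma zb_or_one_bounded:
  "i \<in> {- int K..int g} \<Longrightarrow> \<exists>M. \<forall>x\<in>{lo..hi}. \<bar>zb_or_one t hi g K i x\<bar> \<le> M"
proof (cases "i = int g")
  case True
  then show ?thesis unfolding zb_or_one_def by (intro exI[of _ 1]) simp
next
  case False
  assume i: "i \<in> {- int K..int g}"
  then have i1: "i \<le> int g - 1" using False by auto
  show ?thesis unfolding zb_or_one_def using False zbspline_bounded[of K i] i1 i
    by (intro exI[of _ "(real K + 1) * (1 / (t (i + int K + 1) - t i) + 1 / (t (i + int K + 2) - t (i + 1)))"]) auto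
qed

lemma zbspline_sum_eq_bspline_sum:
  assumes "c (- int K - 1) = 0" "c (int g) = 0"
  shows "(\<Sum>i\<in>{- int K..int g - 1}. c i * zbspline t hi K i x)
       = (\<Sum>p\<in>{- int K..int g}. (c p - c (p - 1)) * ((real K + 1) / (t (p + int K + 1) - t p)) * B K p x)"
proof -
  define E where "E p = (real K + 1) * B K p x / (t (p + int K + 1) - t p)" for p
  have zE: "zbspline t hi K i x = E i - E (i + 1)" for i
  proof -
    have "t (i + 1 + int K + 1) = t (i + int K + 2)" by (rule arg_cong[where f=t]) simp
    then show ?thesis unfolding zbspline_def E_def by (simp add: algebra_simps)
  qed
  have "(\<Sum>i\<in>{- int K..int g - 1}. c i * zbspline t hi K i x)
      = (\<Sum>i\<in>{- int K..int g - 1}. c i * E i) - (\<Sum>i\<in>{- int K..int g - 1}. c (i + 1 - 1) * E (i + 1))"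
    by (simp add: zE right_diff_distrib sum_subtractf)
  also have "(\<Sum>i\<in>{- int K..int g - 1}. c i * E i) = (\<Sum>p\<in>{- int K..int g}. c p * E p)"
  proof -
    have "{- int K..int g} = insert (int g) {- int K..int g - 1}" by auto
    with assms(2) show ?thesis by simp
  qed
  also have "(\<Sum>i\<in>{- int K..int g - 1}. c (i + 1 - 1) * E (i + 1)) = (\<Sum>p\<in>{- int K + 1..int g}. c (p - 1) * E p)"
    using sum_int_shift[of "\<lambda>p. c (p - 1) * E p" "- int K" "int g - 1"] by simp
  also have "\<dots> = (\<Sum>p\<in>{- int K..int g}. c (p - 1) * E p)"
  proof -
    have "{- int K..int g} = insert (- int K) {- int K + 1..int g}" by auto
    with assms(1) show ?thesis by simp
  qed
  finally show ?thesis
    unfolding E_def by (simp add: sum_subtractf[symmetric] divide_inverse algebra_simps)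
qed

lemma zb_or_one_coeffs_zero:
  assumes z: "\<And>x. lo \<le> x \<Longrightarrow> x \<le> hi \<Longrightarrow> (\<Sum>i\<in>{- int K..int g}. c i * zb_or_one t hi g K i x) = 0"
  shows "\<forall>i\<in>{- int K..int g}. c i = 0"
proof -
  let ?I = "{- int K..int g}" and ?S = "{- int K..int g - 1}"
  have I: "?I = insert (int g) ?S" by auto
  have "((\<lambda>x. \<Sum>i\<in>?I. c i * zb_or_one t hi g K i x) has_integral
      (\<Sum>i\<in>?I. c i * (if i = int g then hi - lo else 0))) {lo..hi}"
    by (intro has_integral_sum has_integral_mult_right zb_or_one_has_integral) auto
  moreover have "(\<Sum>i\<in>?I. c i * (if i = int g then hi - lo else 0)) = c (int g) * (hi - lo)"
    by (simp add: if_distrib cong: if_cong)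
  moreover have "((\<lambda>x. \<Sum>i\<in>?I. c i * zb_or_one t hi g K i x) has_integral 0) {lo..hi}"
    by (rule has_integral_eq[OF _ has_integral_0]) (simp add: z)
  ultimately have "c (int g) * (hi - lo) = 0" using has_integral_unique by metis
  then have cg: "c (int g) = 0" using lo_less_hi by simp
  define c' where "c' p = (if p \<in> ?S then c p else 0)" for p
  have "(\<Sum>p\<in>?I. (c' p - c' (p - 1)) * ((real K + 1) / (t (p + int K + 1) - t p)) * B K p x) = 0"
    if "lo \<le> x" "x \<le> hi" for x
  proof -
    have "(\<Sum>i\<in>?S. c' i * zbspline t hi K i x) = (\<Sum>i\<in>?I. c i * zb_or_one t hi g K i x)"
      unfolding I using cg by (simp add: c'_def zb_or_one_def)
    with z[OF that] zbspline_sum_eq_bspline_sum[where c=c' and K=K and x=x] show ?thesis by (simp add: c'_def)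
  qed
  then have "\<forall>p\<in>?I. (c' p - c' (p - 1)) * ((real K + 1) / (t (p + int K + 1) - t p)) = 0"
    by (rule bspline_coeffs_zero)
  then have shift: "c' p = c' (p - 1)" if "p \<in> ?I" for p
    using knot_span_pos[of K p] that by auto
  have c'_zero: "c' p = 0" if "- int K - 1 \<le> p" for p
    using that
  proof (induction p rule: int_ge_induct)
    case (step p)
    then show ?case using shift[of "p + 1"] by (cases "p + 1 \<in> ?I") (auto simp: c'_def)
  qed (simp add: c'_def)
  show ?thesis
  proof
    fix i assume "i \<in> ?I"
    then show "c i = 0" using c'_zero[of i] cg by (cases "i = int g") (auto simp: c'_def)
  qed
qed

end

lemma (in module) span_finite_image:
  assumes "finite P"
  shows "span (F ` P) = range (\<lambda>c. \<Sum>p\<in>P. c p *s F p)"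
proof
  show "range (\<lambda>c. \<Sum>p\<in>P. c p *s F p) \<subseteq> span (F ` P)"
    by (clarify, rule span_sum) (rule span_scale, rule span_base, simp)
  show "span (F ` P) \<subseteq> range (\<lambda>c. \<Sum>p\<in>P. c p *s F p)"
  proof (rule span_minimal)
    show "F ` P \<subseteq> range (\<lambda>c. \<Sum>p\<in>P. c p *s F p)"
    proof clarify
      fix p assume "p \<in> P"
      with assms show "F p \<in> range (\<lambda>c. \<Sum>p\<in>P. c p *s F p)"
        by (intro range_eqI[where x="\<lambda>q. if q = p then 1 else 0"])
          (simp add: if_distrib[of "\<lambda>r. scale r _"] cong: if_cong)
    qed
    show "subspace (range (\<lambda>c. \<Sum>p\<in>P. c p *s F p))"
      unfolding subspace_def
    proof (intro conjI ballI allI)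
      show "0 \<in> range (\<lambda>c. \<Sum>p\<in>P. c p *s F p)"
        by (rule range_eqI[of _ _ "\<lambda>_. 0"]) simp
      fix x y assume "x \<in> range (\<lambda>c. \<Sum>p\<in>P. c p *s F p)" "y \<in> range (\<lambda>c. \<Sum>p\<in>P. c p *s F p)"
      then obtain c1 c2 where "x = (\<Sum>p\<in>P. c1 p *s F p)" "y = (\<Sum>p\<in>P. c2 p *s F p)" by auto
      then show "x + y \<in> range (\<lambda>c. \<Sum>p\<in>P. c p *s F p)"
        by (intro range_eqI[of _ _ "\<lambda>p. c1 p + c2 p"]) (simp add: scale_left_distrib sum.distrib)
    next
      fix r x assume "x \<in> range (\<lambda>c. \<Sum>p\<in>P. c p *s F p)"
      then obtain c where "x = (\<Sum>p\<in>P. c p *s F p)" by auto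
      then show "r *s x \<in> range (\<lambda>c. \<Sum>p\<in>P. c p *s F p)"
        by (intro range_eqI[of _ _ "\<lambda>p. r * c p"]) (simp add: scale_sum_right)
    qed
  qed
qed

lemma (in vector_space) span_subset_span_if_card_le:
  assumes "finite A" "independent T" "finite T" "T \<subseteq> span A" "card A \<le> card T"
  shows "span A \<subseteq> span T"
proof
  fix v assume v: "v \<in> span A"
  show "v \<in> span T"
  proof (rule ccontr)
    assume v_notin: "v \<notin> span T"
    then have "independent (insert v T)" using assms(2) by (rule independent_insertI)
    moreover have "insert v T \<subseteq> span A" using v assms(4) by auto
    ultimately have "card (insert v T) \<le> card A" using independent_span_bound[OF assms(1)] by blast
    moreover have "v \<notin> T" using v_notin span_base by blast
    ultimately show False using assms(3,5) by simp
  qed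
qed
interpretation fspace: vector_space fscale
  by unfold_locales (auto simp: fscale_def fun_eq_iff algebra_simps)

lemma sum_fscale_apply: "(\<Sum>v\<in>A. fscale (u v) (F v)) z = (\<Sum>v\<in>A. u v * F v z)"
proof (cases "finite A")
  case True
  then show ?thesis by (induction A rule: finite_induct) (auto simp: fscale_def)
qed simp

lemma fscale_apply: "fscale r f z = r * f z"
  by (simp add: fscale_def)

lemma inj_on_independent_if_coeffs_zero:
  assumes fin: "finite P"
    and co: "\<And>C. (\<And>z. (\<Sum>p\<in>P. C p * F p z) = 0) \<Longrightarrow> \<forall>p\<in>P. C p = 0"
  shows "inj_on F P" "fspace.independent (F ` P)"
proof -
  show inj: "inj_on F P"
  proof (rule inj_onI, rule ccontr)
    fix p q assume pq: "p \<in> P" "q \<in> P" "F p = F q" "p \<noteq> q"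
    define C where "C r = (if r = p then 1 else if r = q then -1 else (0::real))" for r
    have "(\<Sum>r\<in>P. C r * F r z) = 0" for z
    proof -
      have "(\<Sum>r\<in>P. C r * F r z) = (\<Sum>r\<in>P. (if r = p then F p z else 0) - (if r = q then F q z else 0))"
        unfolding C_def using pq by (intro sum.cong) auto
      also have "\<dots> = 0" using pq fin by (simp add: sum_subtractf)
      finally show ?thesis .
    qed
    then have "C p = 0" using co pq by blast
    then show False unfolding C_def by simp
  qed
  show "fspace.independent (F ` P)"
  proof (rule fspace.independent_if_scalars_zero)
    show "finite (F ` P)" using fin by simp
    fix f x assume s: "(\<Sum>x\<in>F ` P. fscale (f x) x) = 0" and x: "x \<in> F ` P"
    have "(\<Sum>x\<in>F ` P. fscale (f x) x) = (\<Sum>p\<in>P. fscale (f (F p)) (F p))"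
      by (simp add: sum.reindex[OF inj] o_def)
    then have "(\<Sum>p\<in>P. f (F p) * F p z) = 0" for z
      using s sum_fscale_apply[of "\<lambda>p. f (F p)" F P z] by (metis zero_fun_apply)
    then have "\<forall>p\<in>P. f (F p) = 0" by (rule co)
    then show "f x = 0" using x by auto
  qed
qed

text \<open>\<open>ext_knots\<close> constrains the knots only at the indices \<open>-k..g+k+1\<close>; clamping the index
  extends them monotonically to all of \<open>\<int>\<close> without changing the B-splines of degree \<open>k\<close>.\<close>
definition clamp_knots :: "(int \<Rightarrow> real) \<Rightarrow> nat \<Rightarrow> nat \<Rightarrow> int \<Rightarrow> real" where
  "clamp_knots t g k j = t (max (- int k) (min (int g + int k + 1) j))"

lemma clamped_knots_if_ext_knots:
  assumes ext: "ext_knots t lo hi g k"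
  shows "clamped_knots (clamp_knots t g k) g lo hi"
proof
  have step: "t i < t (i + 1)" if "0 \<le> i" "i \<le> int g" for i
    using ext that unfolding ext_knots_def by auto
  have strict: "t i < t (i + 1 + int n)" if "0 \<le> i" "i + 1 + int n \<le> int g + 1" for i n
    using that
  proof (induction n)
    case (Suc n)
    then have "t i < t (i + 1 + int n)" by simp
    also have "\<dots> < t (i + 1 + int n + 1)" using Suc.prems by (intro step) auto
    finally show ?case by (simp add: add.assoc)
  qed (use step in auto)
  fix i j :: int
  show "clamp_knots t g k j = lo" if "j \<le> 0"
    using ext that unfolding ext_knots_def clamp_knots_def by auto
  show "clamp_knots t g k j = hi" if "int g + 1 \<le> j"
    using ext that unfolding ext_knots_def clamp_knots_def by auto
  show "clamp_knots t g k i < clamp_knots t g k j" if "0 \<le> i" "i < j" "j \<le> int g + 1"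
    using strict[of i "nat (j - i - 1)"] that by (simp add: clamp_knots_def)
qed

lemma bspline_clamp_knots:
  "- int k \<le> i \<Longrightarrow> i + int m + 1 \<le> int g + int k + 1 \<Longrightarrow>
   bspline (clamp_knots t g k) hi m i x = bspline t hi m i x"
  by (induction m arbitrary: i) (simp_all add: clamp_knots_def)

lemma zbspline_clamp_knots:
  "- int k \<le> i \<Longrightarrow> i \<le> int g - 1 \<Longrightarrow>
   zbspline (clamp_knots t g k) hi k i x = zbspline t hi k i x"
  by (simp add: zbspline_def bspline_clamp_knots) (simp add: clamp_knots_def)

lemma zb_or_one_expansion_ext_knots:
  assumes ext: "ext_knots t lo hi g k" and i: "i \<in> {- int k..int g}" and x: "x \<in> {lo..hi}"
  shows "zb_or_one (clamp_knots t g k) hi g k i x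
       = (\<Sum>p\<in>{- int k..int g}. zb_or_one_coeff (clamp_knots t g k) g k i p * bspline t hi k p x)"
proof -
  interpret clamped_knots "clamp_knots t g k" g lo hi
    by (rule clamped_knots_if_ext_knots[OF ext])
  show ?thesis
    using zb_or_one_bspline_expansion[OF i] x by (auto simp: bspline_clamp_knots intro!: sum.cong)
qed

lemma restr_sum:
  assumes "finite A" "finite B"
  shows "restr a b c d (\<lambda>(x, y). \<Sum>i\<in>A. \<Sum>j\<in>B. coef i j * f i x * h j y)
       = (\<Sum>p\<in>A \<times> B. fscale (coef (fst p) (snd p)) (restr a b c d (\<lambda>(x, y). f (fst p) x * h (snd p) y)))"
proof (rule ext)
  fix z :: "real \<times> real"
  obtain x y where z: "z = (x, y)" by (cases z)
  have "(\<Sum>i\<in>A. \<Sum>j\<in>B. coef i j * f i x * h j y) = (\<Sum>p\<in>A \<times> B. coef (fst p) (snd p) * (f (fst p) x * h (snd p) y))"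
    by (simp add: sum.cartesian_product case_prod_beta algebra_simps)
  then show "restr a b c d (\<lambda>(x, y). \<Sum>i\<in>A. \<Sum>j\<in>B. coef i j * f i x * h j y) z
       = (\<Sum>p\<in>A \<times> B. fscale (coef (fst p) (snd p)) (restr a b c d (\<lambda>(x, y). f (fst p) x * h (snd p) y))) z"
    unfolding sum_fscale_apply fscale_apply z
    by (cases "(x, y) \<in> {a..b} \<times> {c..d}") (simp_all only: restr_def if_True if_False case_prod_conv mult_zero_right sum.neutral_const)
qed

lemma restr_cong:
  "(\<And>x y. x \<in> {a..b} \<Longrightarrow> y \<in> {c..d} \<Longrightarrow> f (x, y) = f' (x, y)) \<Longrightarrow>
   restr a b c d f = restr a b c d f'"
  unfolding restr_def by (auto simp: fun_eq_iff)

lemma spline_space_eq_span_bsplines: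
  "spline_space a b c d g h k l lam mu
     = fspace.span ((\<lambda>p. restr a b c d (\<lambda>(x, y). bspline lam b k (fst p) x * bspline mu d l (snd p) y))
                    ` ({- int k..int g} \<times> {- int l..int h}))"
  (is "?S = fspace.span (?Bf ` ?K)")
proof -
  have sp: "fspace.span (?Bf ` ?K) = range (\<lambda>c. \<Sum>p\<in>?K. fscale (c p) (?Bf p))"
    by (rule fspace.span_finite_image) simp
  show ?thesis unfolding sp
  proof
    show "?S \<subseteq> range (\<lambda>c. \<Sum>p\<in>?K. fscale (c p) (?Bf p))"
    proof
      fix s assume "s \<in> ?S"
      then obtain coef where s: "s = restr a b c d (\<lambda>(x, y). \<Sum>i \<in> {- int k..int g}. \<Sum>j \<in> {- int l..int h}.
                 coef i j * bspline lam b k i x * bspline mu d l j y)"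
        unfolding spline_space_def by auto
      show "s \<in> range (\<lambda>c. \<Sum>p\<in>?K. fscale (c p) (?Bf p))"
        unfolding s restr_sum[OF finite_atLeastAtMost_int finite_atLeastAtMost_int]
        by (rule range_eqI[of _ _ "\<lambda>p. coef (fst p) (snd p)"]) simp
    qed
    show "range (\<lambda>c. \<Sum>p\<in>?K. fscale (c p) (?Bf p)) \<subseteq> ?S"
    proof clarify
      fix C :: "int \<times> int \<Rightarrow> real"
      have "(\<Sum>p\<in>?K. fscale (C p) (?Bf p)) = restr a b c d (\<lambda>(x, y). \<Sum>i \<in> {- int k..int g}. \<Sum>j \<in> {- int l..int h}.
                 (\<lambda>i j. C (i, j)) i j * bspline lam b k i x * bspline mu d l j y)"
        unfolding restr_sum[OF finite_atLeastAtMost_int finite_atLeastAtMost_int] by simp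
      then show "(\<Sum>p\<in>?K. fscale (C p) (?Bf p)) \<in> ?S" unfolding spline_space_def
        by (intro CollectI exI[of _ "\<lambda>i j. C (i, j)"]) simp
    qed
  qed
qed

fun zb_tensor_index :: "nat \<Rightarrow> nat \<Rightarrow> int \<times> int + int + int \<Rightarrow> int \<times> int" where
  "zb_tensor_index g h (Inl p) = p"
| "zb_tensor_index g h (Inr (Inl i)) = (i, int h)"
| "zb_tensor_index g h (Inr (Inr j)) = (int g, j)"

lemma bij_betw_zb_tensor_index:
  "bij_betw (zb_tensor_index g h) (zb_index g h k l)
     ({- int k..int g} \<times> {- int l..int h} - {(int g, int h)})"
proof (rule bij_betw_imageI)
  show "inj_on (zb_tensor_index g h) (zb_index g h k l)"
    by (auto simp: inj_on_def zb_index_def)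
  show "zb_tensor_index g h ` zb_index g h k l = {- int k..int g} \<times> {- int l..int h} - {(int g, int h)}"
  proof (intro equalityI subsetI)
    fix p assume "p \<in> {- int k..int g} \<times> {- int l..int h} - {(int g, int h)}"
    then obtain i j where p: "p = (i, j)" "i \<in> {- int k..int g}" "j \<in> {- int l..int h}"
      and ne: "(i, j) \<noteq> (int g, int h)" by (cases p) auto
    consider "i = int g" | "i \<noteq> int g" "j = int h" | "i \<noteq> int g" "j \<noteq> int h" by blast
    then show "p \<in> zb_tensor_index g h ` zb_index g h k l"
    proof cases
      case 1
      with p ne show ?thesis by (intro image_eqI[of _ _ "Inr (Inr j)"]) (auto simp: zb_index_def)
    next
      case 2
      with p show ?thesis by (intro image_eqI[of _ _ "Inr (Inl i)"]) (auto simp: zb_index_def)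
    next
      case 3
      with p show ?thesis by (intro image_eqI[of _ _ "Inl (i, j)"]) (auto simp: zb_index_def)
    qed
  qed (auto simp: zb_index_def)
qed

locale rectangle_knots =
  fixes a b c d :: real and g h k l :: nat and lam mu :: "int \<Rightarrow> real"
  assumes ext_x: "ext_knots lam a b g k" and ext_y: "ext_knots mu c d h l"
begin

sublocale X: clamped_knots "clamp_knots lam g k" g a b
  by (rule clamped_knots_if_ext_knots[OF ext_x])

sublocale Y: clamped_knots "clamp_knots mu h l" h c d
  by (rule clamped_knots_if_ext_knots[OF ext_y])

abbreviation Zx where "Zx \<equiv> zb_or_one (clamp_knots lam g k) b g k"
abbreviation Zy where "Zy \<equiv> zb_or_one (clamp_knots mu h l) d h l"

definition tensor_index :: "(int \<times> int) set" where
  "tensor_index = {- int k..int g} \<times> {- int l..int h}"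

definition tensor :: "int \<times> int \<Rightarrow> real \<times> real \<Rightarrow> real" where
  "tensor p = restr a b c d (\<lambda>(x, y). Zx (fst p) x * Zy (snd p) y)"

lemma finite_tensor_index: "finite tensor_index"
  by (simp add: tensor_index_def)

lemma card_tensor_index: "card tensor_index = (g + k + 1) * (h + l + 1)"
proof -
  have "card {- int k..int g} = g + k + 1" "card {- int l..int h} = h + l + 1" by simp_all
  then show ?thesis by (simp only: tensor_index_def card_cartesian_product)
qed

lemma tensor_apply:
  "z \<in> {a..b} \<times> {c..d} \<Longrightarrow>
   tensor p z = Zx (fst p) (fst z) * Zy (snd p) (snd z)"
  by (simp add: tensor_def restr_def case_prod_beta)

lemma tensor_in_spline_space:
  assumes "p \<in> tensor_index"
  shows "tensor p \<in> spline_space a b c d g h k l lam mu"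
proof -
  obtain i j where p: "p = (i, j)" "i \<in> {- int k..int g}" "j \<in> {- int l..int h}"
    using assms unfolding tensor_index_def by auto
  have tensor_eq: "tensor p = restr a b c d (\<lambda>(x, y). \<Sum>i'\<in>{- int k..int g}. \<Sum>j'\<in>{- int l..int h}.
          zb_or_one_coeff (clamp_knots lam g k) g k i i' * zb_or_one_coeff (clamp_knots mu h l) h l j j'
          * bspline lam b k i' x * bspline mu d l j' y)"
    unfolding tensor_def p(1) fst_conv snd_conv
  proof (rule restr_cong)
    fix x y assume "x \<in> {a..b}" "y \<in> {c..d}"
    with zb_or_one_expansion_ext_knots[OF ext_x p(2), of x] zb_or_one_expansion_ext_knots[OF ext_y p(3), of y]
    show "(\<lambda>(x, y). Zx i x * Zy j y) (x, y)
        = (\<lambda>(x, y). \<Sum>i'\<in>{- int k..int g}. \<Sum>j'\<in>{- int l..int h}.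
          zb_or_one_coeff (clamp_knots lam g k) g k i i' * zb_or_one_coeff (clamp_knots mu h l) h l j j'
          * bspline lam b k i' x * bspline mu d l j' y) (x, y)"
      by (simp add: sum_product mult_ac)
  qed
  show ?thesis unfolding spline_space_def by (intro CollectI exI) (rule tensor_eq)
qed

lemma tensor_coeffs_zero:
  assumes z: "\<And>z. (\<Sum>p\<in>tensor_index. C p * tensor p z) = 0"
  shows "\<forall>p\<in>tensor_index. C p = 0"
proof -
  have inner: "\<forall>i\<in>{- int k..int g}. (\<Sum>j\<in>{- int l..int h}. C (i, j) * Zy j y) = 0"
    if y: "y \<in> {c..d}" for y
  proof (rule X.zb_or_one_coeffs_zero)
    fix x assume "a \<le> x" "x \<le> b"
    with y have "(\<Sum>p\<in>tensor_index. C p * tensor p (x, y))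
        = (\<Sum>i\<in>{- int k..int g}. \<Sum>j\<in>{- int l..int h}. C (i, j) * (Zx i x * Zy j y))"
      by (simp add: tensor_apply tensor_index_def sum.cartesian_product case_prod_beta)
    also have "\<dots> = (\<Sum>i\<in>{- int k..int g}. (\<Sum>j\<in>{- int l..int h}. C (i, j) * Zy j y) * Zx i x)"
      by (simp add: sum_distrib_left sum_distrib_right mult_ac)
    finally show "(\<Sum>i\<in>{- int k..int g}. (\<Sum>j\<in>{- int l..int h}. C (i, j) * Zy j y) * Zx i x) = 0"
      using z by simp
  qed
  show ?thesis
  proof
    fix p assume "p \<in> tensor_index"
    then obtain i j where p: "p = (i, j)" "i \<in> {- int k..int g}" "j \<in> {- int l..int h}"
      unfolding tensor_index_def by auto
    have "\<forall>j\<in>{- int l..int h}. C (i, j) = 0"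
      by (rule Y.zb_or_one_coeffs_zero) (use inner p(2) in auto)
    with p show "C p = 0" by auto
  qed
qed

lemma inj_on_tensor: "inj_on tensor tensor_index"
  and independent_tensor: "fspace.independent (tensor ` tensor_index)"
  using inj_on_independent_if_coeffs_zero[OF finite_tensor_index] tensor_coeffs_zero by blast+

lemma spline_space_eq_span_tensor:
  "spline_space a b c d g h k l lam mu = fspace.span (tensor ` tensor_index)"
proof -
  define bsp where "bsp p = restr a b c d (\<lambda>(x, y). bspline lam b k (fst p) x * bspline mu d l (snd p) y)" for p
  have S: "spline_space a b c d g h k l lam mu = fspace.span (bsp ` tensor_index)"
    unfolding bsp_def tensor_index_def by (rule spline_space_eq_span_bsplines)
  have sub: "tensor ` tensor_index \<subseteq> fspace.span (bsp ` tensor_index)"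
    using tensor_in_spline_space S by auto
  have "card (bsp ` tensor_index) \<le> card (tensor ` tensor_index)"
    using card_image_le[OF finite_tensor_index, of bsp] card_image[OF inj_on_tensor] by simp
  then have "fspace.span (bsp ` tensor_index) \<subseteq> fspace.span (tensor ` tensor_index)"
    using finite_tensor_index by (intro fspace.span_subset_span_if_card_le independent_tensor sub) auto
  moreover have "fspace.span (tensor ` tensor_index) \<subseteq> fspace.span (bsp ` tensor_index)"
    using sub by (intro fspace.span_minimal fspace.subspace_span)
  ultimately show ?thesis using S by blast
qed

lemma tensor_has_integral:
  assumes "p \<in> tensor_index"
  shows "(tensor p has_integral (if p = (int g, int h) then (b - a) * (d - c) else 0)) ({a..b} \<times> {c..d})"
proof -
  let ?f = "Zx (fst p)"
  let ?g = "Zy (snd p)"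
  have p: "fst p \<in> {- int k..int g}" "snd p \<in> {- int l..int h}"
    using assms unfolding tensor_index_def by auto
  obtain Mf where "\<forall>x\<in>{a..b}. \<bar>?f x\<bar> \<le> Mf" using X.zb_or_one_bounded[OF p(1)] by blast
  moreover obtain Mg where "\<forall>y\<in>{c..d}. \<bar>?g y\<bar> \<le> Mg" using Y.zb_or_one_bounded[OF p(2)] by blast
  ultimately have "((\<lambda>z. ?f (fst z) * ?g (snd z)) has_integral (integral {a..b} ?f * integral {c..d} ?g)) ({a..b} \<times> {c..d})"
    by (intro has_integral_tensor_product X.zb_or_one_measurable Y.zb_or_one_measurable) auto
  moreover have "integral {a..b} ?f * integral {c..d} ?g = (if p = (int g, int h) then (b - a) * (d - c) else 0)"
    using integral_unique[OF X.zb_or_one_has_integral[OF p(1)]] integral_unique[OF Y.zb_or_one_has_integral[OF p(2)]]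
    by (cases p) auto
  ultimately have "((\<lambda>z. ?f (fst z) * ?g (snd z)) has_integral (if p = (int g, int h) then (b - a) * (d - c) else 0))
      ({a..b} \<times> {c..d})" by simp
  then show ?thesis by (rule has_integral_eq[rotated]) (simp add: tensor_apply)
qed

lemma tensor_sum_has_integral:
  assumes "P \<subseteq> tensor_index"
  shows "((\<Sum>p\<in>P. fscale (C p) (tensor p)) has_integral
          (if (int g, int h) \<in> P then C (int g, int h) * ((b - a) * (d - c)) else 0)) ({a..b} \<times> {c..d})"
proof -
  have fin: "finite P" using finite_tensor_index assms by (rule finite_subset[rotated])
  have "((\<lambda>z. \<Sum>p\<in>P. C p * tensor p z) has_integral
          (\<Sum>p\<in>P. C p * (if p = (int g, int h) then (b - a) * (d - c) else 0))) ({a..b} \<times> {c..d})"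
    using assms by (intro has_integral_sum[OF fin] has_integral_mult_right tensor_has_integral) auto
  then show ?thesis
    using fin by (simp add: sum_fscale_apply[abs_def] if_distrib[of "(*) _"] sum.delta cong: if_cong)
qed

lemma zero_int_space_eq_span_tensor:
  "zero_int_space a b c d g h k l lam mu = fspace.span (tensor ` (tensor_index - {(int g, int h)}))"
  (is "?Z = fspace.span (tensor ` ?K0)")
proof
  have area: "(b - a) * (d - c) \<noteq> 0" using X.lo_less_hi Y.lo_less_hi by simp
  have gh: "(int g, int h) \<in> tensor_index" by (simp add: tensor_index_def)
  show "?Z \<subseteq> fspace.span (tensor ` ?K0)"
  proof
    fix s assume "s \<in> ?Z"
    then have "s \<in> fspace.span (tensor ` tensor_index)" and s0: "integral ({a..b} \<times> {c..d}) s = 0"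
      unfolding zero_int_space_def spline_space_eq_span_tensor by auto
    then obtain C where s: "s = (\<Sum>p\<in>tensor_index. fscale (C p) (tensor p))"
      unfolding fspace.span_finite_image[OF finite_tensor_index] by auto
    have "C (int g, int h) = 0"
      using integral_unique[OF tensor_sum_has_integral[of tensor_index C]] s0 area gh s by simp
    then have "s = (\<Sum>p\<in>?K0. fscale (C p) (tensor p))"
      unfolding s sum.remove[OF finite_tensor_index gh] by simp
    then show "s \<in> fspace.span (tensor ` ?K0)"
      unfolding fspace.span_finite_image[OF finite_Diff[OF finite_tensor_index]] by auto
  qed
  show "fspace.span (tensor ` ?K0) \<subseteq> ?Z"
  proof
    fix s assume s: "s \<in> fspace.span (tensor ` ?K0)"
    then have "s \<in> spline_space a b c d g h k l lam mu"
      unfolding spline_space_eq_span_tensor by (rule subsetD[OF fspace.span_mono, rotated]) auto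
    moreover obtain C where "s = (\<Sum>p\<in>?K0. fscale (C p) (tensor p))"
      using s unfolding fspace.span_finite_image[OF finite_Diff[OF finite_tensor_index]] by auto
    then have "integral ({a..b} \<times> {c..d}) s = 0"
      using integral_unique[OF tensor_sum_has_integral[of ?K0 C]] by simp
    ultimately show "s \<in> ?Z" unfolding zero_int_space_def by simp
  qed
qed

lemma zb_fun_eq_tensor:
  assumes "u \<in> zb_index g h k l"
  shows "zb_fun a b c d k l lam mu u = tensor (zb_tensor_index g h u)"
  using assms by (auto simp: zb_index_def tensor_def zb_or_one_def zbspline_clamp_knots)

lemma zb_fun_image:
  "zb_fun a b c d k l lam mu ` zb_index g h k l = tensor ` (tensor_index - {(int g, int h)})"
proof -
  have "zb_fun a b c d k l lam mu ` zb_index g h k l = tensor ` zb_tensor_index g h ` zb_index g h k l"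
    unfolding image_image using zb_fun_eq_tensor by (rule image_cong[OF refl])
  then show ?thesis
    using bij_betw_zb_tensor_index[of g h k l] by (simp add: bij_betw_def tensor_index_def)
qed

lemma inj_on_zb_fun: "inj_on (zb_fun a b c d k l lam mu) (zb_index g h k l)"
proof -
  have "inj_on (tensor \<circ> zb_tensor_index g h) (zb_index g h k l)"
    using bij_betw_zb_tensor_index[of g h k l] inj_on_subset[OF inj_on_tensor]
    by (intro comp_inj_on) (auto simp: bij_betw_def tensor_index_def)
  moreover have "inj_on (zb_fun a b c d k l lam mu) (zb_index g h k l)
      = inj_on (tensor \<circ> zb_tensor_index g h) (zb_index g h k l)"
    by (rule inj_on_cong) (simp add: zb_fun_eq_tensor)
  ultimately show ?thesis by simp
qed

lemma card_tensor_image_zb: "card (tensor ` (tensor_index - {(int g, int h)})) = (g + k + 1) * (h + l + 1) - 1"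
proof -
  have "(int g, int h) \<in> tensor_index" by (simp add: tensor_index_def)
  with inj_on_subset[OF inj_on_tensor, of "tensor_index - {(int g, int h)}"] show ?thesis
    by (simp add: card_image finite_tensor_index card_tensor_index)
qed

end

theorem theorem4:
  fixes a b c d :: real and g h k l :: nat and lam mu :: "int \<Rightarrow> real"
  assumes "a < b" and "c < d"
    and "ext_knots lam a b g k" and "ext_knots mu c d h l"
  defines "Zsp \<equiv> zero_int_space a b c d g h k l lam mu"
    and "ZB \<equiv> zb_fun a b c d k l lam mu"
    and "I \<equiv> zb_index g h k l"
  shows "inj_on ZB I \<and> ZB ` I \<subseteq> Zsp
         \<and> module.independent fscale (ZB ` I)
         \<and> module.span fscale (ZB ` I) = Zsp
         \<and> vector_space.dim fscale Zsp = (g + k + 1) * (h + l + 1) - 1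
         \<and> vector_space.dim fscale Zsp = (g + k) * (h + l) + g + k + h + l"
proof -
  interpret rectangle_knots a b c d g h k l lam mu
    using assms(3,4) by unfold_locales
  have image: "ZB ` I = tensor ` (tensor_index - {(int g, int h)})"
    unfolding ZB_def I_def by (rule zb_fun_image)
  have indep: "fspace.independent (ZB ` I)"
    unfolding image using independent_tensor by (rule fspace.independent_mono) auto
  have span: "fspace.span (ZB ` I) = Zsp"
    unfolding image Zsp_def by (rule zero_int_space_eq_span_tensor[symmetric])
  have "fspace.dim Zsp = (g + k + 1) * (h + l + 1) - 1"
    using fspace.dim_span_eq_card_independent[OF indep, unfolded span] by (simp add: image card_tensor_image_zb)
  moreover have "inj_on ZB I"
    unfolding ZB_def I_def by (rule inj_on_zb_fun)
  ultimately show ?thesis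
    using indep span fspace.span_superset[of "ZB ` I"] by (auto simp: algebra_simps)
qed

end
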